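(* Let $\Theta$ be a suitable set of moduli of continuity and let $E\subset\mathrm{WTC}_\Theta(\mathbb R^M)$ have $L^1_{loc}$-equicontinuous $m$-bounds. Let $\overline E$ be the closure of $E$ in $(\mathrm{WTC}_\Theta(\mathbb R^M),\sigma_\Theta)$. Then the map $\varphi:\mathbb R\times\overline E\to\mathrm{WTC}_\Theta(\mathbb R^M)$, $\varphi(t,f)=f_t$, is well defined and continuous (with $\overline E$ and $\mathrm{WTC}_\Theta(\mathbb R^M)$ carrying $\sigma_\Theta$). In particular, if $f\in\mathrm{WTC}_\Theta(\mathbb R^M)$ has $L^1_{loc}$-equicontinuous $m$-bounds, then $(t,g)\mapsto g_t$ defines a continuous flow on $\mathrm{Hull}_{(\mathrm{WTC}_\Theta,\sigma_\Theta)}(f)$.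
   Context: Notation: $|\cdot|$ is the Euclidean norm on $\mathbb R^N$ and $B_j$ the closed ball of $\mathbb R^N$ of radius $j$ centered at $0$. $L^1_{loc}$ denotes real functions on $\mathbb R$ integrable on every compact interval. For $f:\mathbb R\times\mathbb R^N\to\mathbb R^M$ and $t\in\mathbb R$, $f_t(s,x)=f(s+t,x)$. A function $f$ satisfies (C1) if it is Borel measurable, and (C2) if for every compact $K\subset\mathbb R^N$ there is $m^K\in L^1_{loc}$ (an $m$-bound of $f$ on $K$) with $|f(t,x)|\le m^K(t)$ for all $x\in K$ and a.e. $t$. A suitable set of moduli of continuity is a countable family $\Theta=\{\theta^I_j\mid j\in\mathbb N,\ I=[q_1,q_2],\ q_1<q_2,\ q_1,q_2\in\mathbb Q\}$ of nondecreasing continuous functions $\theta^I_j:\mathbb R^+\to\mathbb R^+$ with $\theta^I_j(0)=0$ and $\theta^{I_1}_{j_1}\le\theta^{I_2}_{j_2}$ whenever $I_1\subseteq I_2$ and $j_1\le j_2$. $\mathcal K^I_j$ is the set of continuous $x:I\to B_j$ admitting $\theta^I_j$ as modulus of continuity. $\mathrm{WTC}_\Theta(\mathbb R^M)$ is the set of $f$ satisfying (C1), (C2) and (W): for each $j$ and $I=[q_1,q_2]$ with rational endpoints, if $x_n\in\mathcal K^I_j$ converge uniformly to $x\in\mathcal K^I_j$ then $\int_I f(t,x_n(t))dt\to\int_I f(t,x(t))dt$; functions differing only on a null subset of $\mathbb R^{1+N}$ are identified. $\sigma_\Theta$ is the topology on $\mathrm{WTC}_\Theta(\mathbb R^M)$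 generated by the seminorms $p_{I,j}(f)=\sup_{x\in\mathcal K^I_j}|\int_I f(t,x(t))\,dt|$. A set $S$ of nonnegative functions in $L^1_{loc}$ is $L^1_{loc}$-equicontinuous if for all $r,\varepsilon>0$ there is $\delta>0$ with $\sup_{m\in S}\int_s^t m<\varepsilon$ whenever $-r\le s\le t\le r$, $t-s<\delta$. A set $E$ has $L^1_{loc}$-equicontinuous $m$-bounds if for every $j\in\mathbb N$ there is an $L^1_{loc}$-equicontinuous set $S^j\subset L^1_{loc}$ consisting of $m$-bounds on $B_j$ of the functions of $E$ (one for each function); a single function $f$ has $L^1_{loc}$-equicontinuous $m$-bounds if $\{f_t\mid t\in\mathbb R\}$ does. $\mathrm{Hull}_{(\mathrm{WTC}_\Theta,\sigma_\Theta)}(f)$ is the closure of $\{f_t\mid t\in\mathbb R\}$ in $(\mathrm{WTC}_\Theta(\mathbb R^M),\sigma_\Theta)$. *)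

theory Defs
  imports "HOL-Analysis.Analysis"
begin

type_synonym modfam = "rat \<times> rat \<Rightarrow> nat \<Rightarrow> real \<Rightarrow> real"

text \<open>Rational closed intervals I = [q1,q2] are encoded by pairs (q1,q2) with q1 < q2.\<close>
definition valid_ivl :: "rat \<times> rat \<Rightarrow> bool" where
  "valid_ivl q \<longleftrightarrow> fst q < snd q"

definition ivl :: "rat \<times> rat \<Rightarrow> real set" where
  "ivl q = {real_of_rat (fst q) .. real_of_rat (snd q)}"

definition suitable_moduli :: "modfam \<Rightarrow> bool" where
  "suitable_moduli \<Theta> \<longleftrightarrow>
     (\<forall>q j. valid_ivl q \<longrightarrow>
        mono_on {0..} (\<Theta> q j) \<and> continuous_on {0..} (\<Theta> q j) \<and> \<Theta> q j 0 = 0 \<and>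
        (\<forall>r\<ge>0. \<Theta> q j r \<ge> 0)) \<and>
     (\<forall>q1 q2 j1 j2. valid_ivl q1 \<and> valid_ivl q2 \<and> ivl q1 \<subseteq> ivl q2 \<and> j1 \<le> j2 \<longrightarrow>
        (\<forall>r\<ge>0. \<Theta> q1 j1 r \<le> \<Theta> q2 j2 r))"

definition Kset :: "modfam \<Rightarrow> rat \<times> rat \<Rightarrow> nat \<Rightarrow> (real \<Rightarrow> 'a::euclidean_space) set" where
  "Kset \<Theta> q j = {x. continuous_on (ivl q) x \<and>
      (\<forall>t\<in>ivl q. norm (x t) \<le> real j) \<and>
      (\<forall>s\<in>ivl q. \<forall>t\<in>ivl q. norm (x t - x s) \<le> \<Theta> q j \<bar>t - s\<bar>)}"

definition curve_int :: "rat \<times> rat \<Rightarrow> (real \<Rightarrow> 'a \<Rightarrow> 'b::euclidean_space) \<Rightarrow> (real \<Rightarrow> 'a) \<Rightarrow> 'b" where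
  "curve_int q f x = (LINT t:ivl q|lborel. f t (x t))"

definition L1loc :: "(real \<Rightarrow> real) \<Rightarrow> bool" where
  "L1loc m \<longleftrightarrow> (\<forall>a b. set_integrable lborel {a..b} m)"

definition C1 :: "(real \<Rightarrow> 'a::euclidean_space \<Rightarrow> 'b::euclidean_space) \<Rightarrow> bool" where
  "C1 f \<longleftrightarrow> case_prod f \<in> borel_measurable borel"

definition mbound :: "(real \<Rightarrow> 'a::euclidean_space \<Rightarrow> 'b::euclidean_space) \<Rightarrow> 'a set \<Rightarrow> (real \<Rightarrow> real) \<Rightarrow> bool" where
  "mbound f K m \<longleftrightarrow> L1loc m \<and> (AE t in lborel. \<forall>x\<in>K. norm (f t x) \<le> m t)"

definition C2 :: "(real \<Rightarrow> 'a::euclidean_space \<Rightarrow> 'b::euclidean_space) \<Rightarrow> bool" where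
  "C2 f \<longleftrightarrow> (\<forall>K. compact K \<longrightarrow> (\<exists>m. mbound f K m))"

definition condW :: "modfam \<Rightarrow> (real \<Rightarrow> 'a::euclidean_space \<Rightarrow> 'b::euclidean_space) \<Rightarrow> bool" where
  "condW \<Theta> f \<longleftrightarrow> (\<forall>q j xs x. valid_ivl q \<and> (\<forall>n. xs n \<in> Kset \<Theta> q j) \<and> x \<in> Kset \<Theta> q j \<and>
       uniform_limit (ivl q) xs x sequentially \<longrightarrow>
       (\<lambda>n. curve_int q f (xs n)) \<longlonglongrightarrow> curve_int q f x)"

definition WTC :: "modfam \<Rightarrow> (real \<Rightarrow> 'a::euclidean_space \<Rightarrow> 'b::euclidean_space) set" where
  "WTC \<Theta> = {f. C1 f \<and> C2 f \<and> condW \<Theta> f}"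

definition pIj :: "modfam \<Rightarrow> rat \<times> rat \<Rightarrow> nat \<Rightarrow> (real \<Rightarrow> 'a::euclidean_space \<Rightarrow> 'b::euclidean_space) \<Rightarrow> real" where
  "pIj \<Theta> q j f = (SUP x\<in>Kset \<Theta> q j. norm (curve_int q f x))"

definition sigma_top :: "modfam \<Rightarrow> (real \<Rightarrow> 'a::euclidean_space \<Rightarrow> 'b::euclidean_space) topology" where
  "sigma_top \<Theta> = topology (\<lambda>U. U \<subseteq> WTC \<Theta> \<and>
     (\<forall>f\<in>U. \<exists>F e. finite F \<and> F \<subseteq> {(q,j). valid_ivl q} \<and> e > 0 \<and>
        {g\<in>WTC \<Theta>. \<forall>(q,j)\<in>F. pIj \<Theta> q j (\<lambda>t x. g t x - f t x) < e} \<subseteq> U))"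

definition shift :: "real \<Rightarrow> (real \<Rightarrow> 'a \<Rightarrow> 'b) \<Rightarrow> (real \<Rightarrow> 'a \<Rightarrow> 'b)" where
  "shift t f = (\<lambda>s x. f (s + t) x)"

definition L1loc_equicont :: "(real \<Rightarrow> real) set \<Rightarrow> bool" where
  "L1loc_equicont S \<longleftrightarrow> (\<forall>m\<in>S. L1loc m \<and> (\<forall>t. m t \<ge> 0)) \<and>
     (\<forall>r>0. \<forall>e>0. \<exists>d>0. \<forall>m\<in>S. \<forall>s t. -r \<le> s \<and> s \<le> t \<and> t \<le> r \<and> t - s < d \<longrightarrow>
        (LINT u:{s..t}|lborel. m u) < e)"

definition equicont_mbounds :: "(real \<Rightarrow> 'a::euclidean_space \<Rightarrow> 'b::euclidean_space) set \<Rightarrow> bool" where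
  "equicont_mbounds E \<longleftrightarrow> (\<forall>j::nat. \<exists>mb. (\<forall>f\<in>E. mbound f (cball 0 (real j)) (mb f)) \<and>
        L1loc_equicont (mb ` E))"

definition equicont_mbounds_fun :: "(real \<Rightarrow> 'a::euclidean_space \<Rightarrow> 'b::euclidean_space) \<Rightarrow> bool" where
  "equicont_mbounds_fun f \<longleftrightarrow> equicont_mbounds (range (\<lambda>t. shift t f))"

definition Hull :: "modfam \<Rightarrow> (real \<Rightarrow> 'a::euclidean_space \<Rightarrow> 'b::euclidean_space) \<Rightarrow> (real \<Rightarrow> 'a \<Rightarrow> 'b) set" where
  "Hull \<Theta> f = (sigma_top \<Theta>) closure_of (range (\<lambda>t. shift t f))"

end

theory Submission
  imports Defs "HOL-Complex_Analysis.Great_Picard"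
begin

text \<open>Continuity of (t, f) \<mapsto> f_t at (t0, f0) splits, by the triangle inequality for the seminorms,
  into continuity of translation of the single function f0, and smallness of p(f_t - f0_t) for f close
  to f0, uniformly in t near t0.

  For the first, condition (W) and the compactness of K^I_j (Arzela-Ascoli) make the curve integral
  uniformly continuous on K^I_j; translating a curve by \<tau> moves it by at most \<theta>(|\<tau>|) and shifts the
  interval of integration, which changes the integral only by short end pieces controlled by an m-bound.

  For the second, substituting u = s + t turns the integral of f_t along x over I into integrals of f on
  a fixed rational interval along the translated curve, extended constantly, minus integrals along
  constant curves up to the moving endpoints of I + t. The former are seminorms of f - f0; the latter are
  seminorms on rational intervals with nearby endpoints, up to integrals over short intervals, which are
  uniformly small on the closure of E because the m-bounds of E are L1loc-equicontinuous.

  The hull is the closure of an orbit, which is invariant under the shifts; by continuity so is its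
  closure.\<close>

lemma valid_ivl_le: "valid_ivl q \<Longrightarrow> real_of_rat (fst q) \<le> real_of_rat (snd q)"
  by (auto simp: valid_ivl_def of_rat_less_eq)

lemma valid_ivl_of_real_less: "real_of_rat a < real_of_rat b \<Longrightarrow> valid_ivl (a, b)"
  by (simp add: valid_ivl_def of_rat_less)

lemma suitable_moduli_nonneg:
  "suitable_moduli \<Theta> \<Longrightarrow> valid_ivl q \<Longrightarrow> 0 \<le> r \<Longrightarrow> 0 \<le> \<Theta> q j r"
  unfolding suitable_moduli_def by blast

lemma suitable_moduli_mono:
  assumes "suitable_moduli \<Theta>" "valid_ivl q" "0 \<le> a" "a \<le> b"
  shows "\<Theta> q j a \<le> \<Theta> q j b"
proof -
  have "mono_on {0..} (\<Theta> q j)" using assms(1,2) unfolding suitable_moduli_def by blast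
  then show ?thesis using assms(3,4) by (auto intro: mono_onD)
qed

lemma suitable_moduli_subset:
  "suitable_moduli \<Theta> \<Longrightarrow> valid_ivl q1 \<Longrightarrow> valid_ivl q2 \<Longrightarrow> ivl q1 \<subseteq> ivl q2 \<Longrightarrow> j1 \<le> j2 \<Longrightarrow> 0 \<le> r
    \<Longrightarrow> \<Theta> q1 j1 r \<le> \<Theta> q2 j2 r"
  unfolding suitable_moduli_def by blast

lemma suitable_moduli_small:
  assumes "suitable_moduli \<Theta>" "valid_ivl q" "0 < e"
  obtains d where "0 < d" "\<And>r. 0 \<le> r \<Longrightarrow> r < d \<Longrightarrow> \<Theta> q j r < e"
proof -
  have "continuous_on {0..} (\<Theta> q j)" and zero: "\<Theta> q j 0 = 0"
    using assms(1,2) unfolding suitable_moduli_def by blast+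
  then obtain d where d: "0 < d" "\<forall>r\<in>{0..}. dist r 0 < d \<longrightarrow> dist (\<Theta> q j r) (\<Theta> q j 0) < e"
    using assms(3) unfolding continuous_on_iff by (metis atLeast_iff order_refl)
  show ?thesis
  proof (rule that[OF d(1)])
    fix r :: real assume "0 \<le> r" "r < d"
    then show "\<Theta> q j r < e" using d(2) zero by (auto simp: dist_real_def)
  qed
qed

lemma Kset_cont: "x \<in> Kset \<Theta> q j \<Longrightarrow> continuous_on (ivl q) x"
  and Kset_bound: "x \<in> Kset \<Theta> q j \<Longrightarrow> t \<in> ivl q \<Longrightarrow> norm (x t) \<le> real j"
  and Kset_modulus: "x \<in> Kset \<Theta> q j \<Longrightarrow> s \<in> ivl q \<Longrightarrow> t \<in> ivl q \<Longrightarrow> norm (x t - x s) \<le> \<Theta> q j \<bar>t - s\<bar>"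
  unfolding Kset_def by auto

lemma const_in_Kset:
  "suitable_moduli \<Theta> \<Longrightarrow> valid_ivl q \<Longrightarrow> norm c \<le> real j \<Longrightarrow> (\<lambda>_. c) \<in> Kset \<Theta> q j"
  unfolding Kset_def using suitable_moduli_nonneg by auto

lemma Kset_nonempty: "suitable_moduli \<Theta> \<Longrightarrow> valid_ivl q \<Longrightarrow> Kset \<Theta> q j \<noteq> {}"
  using const_in_Kset[of \<Theta> q 0 j] by auto

lemma C2_mbound: "C2 f \<Longrightarrow> \<exists>m. mbound f (cball 0 r) m"
  unfolding C2_def by auto

lemma WTC_C1: "f \<in> WTC \<Theta> \<Longrightarrow> C1 f"
  and WTC_C2: "f \<in> WTC \<Theta> \<Longrightarrow> C2 f"
  and WTC_condW: "f \<in> WTC \<Theta> \<Longrightarrow> condW \<Theta> f"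
  unfolding WTC_def by auto

lemma mbound_integrable:
  assumes "mbound h K m"
  shows "m integrable_on {a..b}" and "(LINT u:{a..b}|lborel. m u) = integral {a..b} m"
  using assms set_borel_integral_eq_integral unfolding mbound_def L1loc_def by blast+

lemma integral_along_curve:
  fixes h :: "real \<Rightarrow> 'a::euclidean_space \<Rightarrow> 'b::euclidean_space"
  assumes C1: "C1 h" and mb: "mbound h (cball 0 j) m" and ab: "a \<le> b"
    and yc: "continuous_on {a..b} y" and yb: "\<forall>u\<in>{a..b}. norm (y u) \<le> j"
  shows "set_integrable lborel {a..b} (\<lambda>u. h u (y u))"
    and "(\<lambda>u. h u (y u)) integrable_on {a..b}"
    and "(LINT u:{a..b}|lborel. h u (y u)) = integral {a..b} (\<lambda>u. h u (y u))"
    and "norm (integral {a..b} (\<lambda>u. h u (y u))) \<le> integral {a..b} m"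
proof -
  text \<open>Extend y continuously to the whole line, so that the integrand is Borel measurable.\<close>
  define y' where "y' = (\<lambda>u. y (max a (min b u)))"
  have "continuous_on UNIV (\<lambda>u::real. max a (min b u))" by (intro continuous_intros)
  then have "continuous_on UNIV y'"
    unfolding y'_def by (rule continuous_on_compose2[OF yc]) (use ab in auto)
  then have "(\<lambda>u. (u, y' u)) \<in> borel_measurable borel"
    by (intro borel_measurable_continuous_onI continuous_intros)
  from measurable_compose[OF this C1[unfolded C1_def]]
  have meas: "(\<lambda>u. h u (y' u)) \<in> borel_measurable lborel" by simp
  have eq: "\<And>u. u \<in> {a..b} \<Longrightarrow> y' u = y u" by (auto simp: y'_def)
  have mi: "set_integrable lborel {a..b} m" using mb by (simp add: mbound_def L1loc_def)
  have "AE u in lborel. \<forall>x\<in>cball 0 j. norm (h u x) \<le> m u" using mb by (simp add: mbound_def)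
  then have bound: "AE u in lborel. u \<in> {a..b} \<longrightarrow> norm (h u (y' u)) \<le> m u"
    by eventually_elim (use yb eq in auto)
  have si': "set_integrable lborel {a..b} (\<lambda>u. h u (y' u))"
  proof (rule set_integrable_bound[OF mi])
    show "set_borel_measurable lborel {a..b} (\<lambda>u. h u (y' u))"
      unfolding set_borel_measurable_def by (intro borel_measurable_scaleR borel_measurable_indicator meas) auto
    show "AE u in lborel. u \<in> {a..b} \<longrightarrow> norm (h u (y' u)) \<le> norm (m u)"
      using bound by eventually_elim auto
  qed
  show si: "set_integrable lborel {a..b} (\<lambda>u. h u (y u))"
    using si' by (subst set_integrable_cong[where f'="\<lambda>u. h u (y' u)"]) (auto simp: eq)
  show "(\<lambda>u. h u (y u)) integrable_on {a..b}"
    using set_borel_integral_eq_integral(1)[OF si] .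
  show e1: "(LINT u:{a..b}|lborel. h u (y u)) = integral {a..b} (\<lambda>u. h u (y u))"
    using set_borel_integral_eq_integral(2)[OF si] .
  have "norm (LINT u:{a..b}|lborel. h u (y' u)) \<le> (LINT u:{a..b}|lborel. norm (h u (y' u)))"
    by (rule set_integral_norm_bound[OF si'])
  also have "\<dots> \<le> (LINT u:{a..b}|lborel. m u)"
    by (rule set_integral_mono_AE[OF set_integrable_norm[OF si'] mi]) (use bound in simp)
  also have "(LINT u:{a..b}|lborel. h u (y' u)) = (LINT u:{a..b}|lborel. h u (y u))"
    by (rule set_lebesgue_integral_cong) (auto simp: eq)
  finally show "norm (integral {a..b} (\<lambda>u. h u (y u))) \<le> integral {a..b} m"
    using e1 mbound_integrable(2)[OF mb] by simp
qed

lemma curve_int_integral: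
  fixes h :: "real \<Rightarrow> 'a::euclidean_space \<Rightarrow> 'b::euclidean_space"
  assumes "h \<in> WTC \<Theta>" "valid_ivl q" "x \<in> Kset \<Theta> q j"
  shows "set_integrable lborel (ivl q) (\<lambda>u. h u (x u))"
    and "curve_int q h x = integral (ivl q) (\<lambda>u. h u (x u))"
proof -
  obtain m where m: "mbound h (cball 0 (real j)) m" using C2_mbound WTC_C2[OF assms(1)] by blast
  note I = integral_along_curve[OF WTC_C1[OF assms(1)] m valid_ivl_le[OF assms(2)]]
  show "set_integrable lborel (ivl q) (\<lambda>u. h u (x u))"
    using I(1) Kset_cont[OF assms(3)] Kset_bound[OF assms(3)] by (simp add: ivl_def)
  show "curve_int q h x = integral (ivl q) (\<lambda>u. h u (x u))"
    using I(3) Kset_cont[OF assms(3)] Kset_bound[OF assms(3)] by (simp add: curve_int_def ivl_def)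
qed

lemma curve_int_diff:
  assumes "f \<in> WTC \<Theta>" "g \<in> WTC \<Theta>" "valid_ivl q" "x \<in> Kset \<Theta> q j"
  shows "curve_int q (\<lambda>t x. g t x - f t x) x = curve_int q g x - curve_int q f x"
  unfolding curve_int_def
  by (rule set_integral_diff(2)[OF curve_int_integral(1)[OF assms(2-4)] curve_int_integral(1)[OF assms(1,3,4)]])

lemma curve_int_bounded:
  assumes "f \<in> WTC \<Theta>" "valid_ivl q"
  obtains B where "\<And>x. x \<in> Kset \<Theta> q j \<Longrightarrow> norm (curve_int q f x) \<le> B"
proof -
  obtain m where m: "mbound f (cball 0 (real j)) m" using C2_mbound WTC_C2[OF assms(1)] by blast
  have "norm (curve_int q f x) \<le> integral (ivl q) m" if "x \<in> Kset \<Theta> q j" for x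
    using integral_along_curve(4)[OF WTC_C1[OF assms(1)] m valid_ivl_le[OF assms(2)]]
      curve_int_integral(2)[OF assms that] Kset_cont[OF that] Kset_bound[OF that]
    by (simp add: ivl_def)
  then show ?thesis using that by blast
qed

definition sigma_ball :: "modfam \<Rightarrow> ((rat \<times> rat) \<times> nat) set \<Rightarrow> real
    \<Rightarrow> (real \<Rightarrow> 'a::euclidean_space \<Rightarrow> 'b::euclidean_space) \<Rightarrow> (real \<Rightarrow> 'a \<Rightarrow> 'b) set" where
  "sigma_ball \<Theta> F e f = {g\<in>WTC \<Theta>. \<forall>(q,j)\<in>F. pIj \<Theta> q j (\<lambda>t x. g t x - f t x) < e}"

lemma curve_int_diff_le_pIj:
  fixes f g :: "real \<Rightarrow> 'a::euclidean_space \<Rightarrow> 'b::euclidean_space"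
  assumes "f \<in> WTC \<Theta>" "g \<in> WTC \<Theta>" "valid_ivl q" "x \<in> Kset \<Theta> q j"
  shows "norm (curve_int q g x - curve_int q f x) \<le> pIj \<Theta> q j (\<lambda>t x. g t x - f t x)"
proof -
  obtain Bf where Bf: "\<And>x. x \<in> Kset \<Theta> q j \<Longrightarrow> norm (curve_int q f x) \<le> Bf"
    using curve_int_bounded[OF assms(1,3)] by blast
  obtain Bg where Bg: "\<And>x. x \<in> Kset \<Theta> q j \<Longrightarrow> norm (curve_int q g x) \<le> Bg"
    using curve_int_bounded[OF assms(2,3)] by blast
  have "bdd_above ((\<lambda>x. norm (curve_int q (\<lambda>t x. g t x - f t x) x)) ` Kset \<Theta> q j)"
  proof (rule bdd_aboveI2)
    fix x :: "real \<Rightarrow> 'a" assume x: "x \<in> Kset \<Theta> q j"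
    have "norm (curve_int q (\<lambda>t x. g t x - f t x) x) \<le> norm (curve_int q g x) + norm (curve_int q f x)"
      using curve_int_diff[OF assms(1-3) x] norm_triangle_ineq4 by simp
    then show "norm (curve_int q (\<lambda>t x. g t x - f t x) x) \<le> Bg + Bf"
      using Bf[OF x] Bg[OF x] by simp
  qed
  then have "norm (curve_int q (\<lambda>t x. g t x - f t x) x) \<le> pIj \<Theta> q j (\<lambda>t x. g t x - f t x)"
    unfolding pIj_def by (rule cSUP_upper[OF assms(4)])
  then show ?thesis using curve_int_diff[OF assms] by simp
qed

lemma pIj_le:
  fixes f g :: "real \<Rightarrow> 'a::euclidean_space \<Rightarrow> 'b::euclidean_space"
  assumes "suitable_moduli \<Theta>" "f \<in> WTC \<Theta>" "g \<in> WTC \<Theta>" "valid_ivl q"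
    and "\<And>x. x \<in> Kset \<Theta> q j \<Longrightarrow> norm (curve_int q g x - curve_int q f x) \<le> c"
  shows "pIj \<Theta> q j (\<lambda>t x. g t x - f t x) \<le> c"
  unfolding pIj_def
proof (rule cSUP_least)
  show "Kset \<Theta> q j \<noteq> {}" using Kset_nonempty[OF assms(1,4)] .
  fix x :: "real \<Rightarrow> 'a" assume x: "x \<in> Kset \<Theta> q j"
  show "norm (curve_int q (\<lambda>t x. g t x - f t x) x) \<le> c"
    using assms(5)[OF x] curve_int_diff[OF assms(2-4) x] by simp
qed

lemma pIj_triangle:
  fixes f g h :: "real \<Rightarrow> 'a::euclidean_space \<Rightarrow> 'b::euclidean_space"
  assumes "suitable_moduli \<Theta>" "f \<in> WTC \<Theta>" "g \<in> WTC \<Theta>" "h \<in> WTC \<Theta>" "valid_ivl q"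
  shows "pIj \<Theta> q j (\<lambda>t x. g t x - f t x)
    \<le> pIj \<Theta> q j (\<lambda>t x. g t x - h t x) + pIj \<Theta> q j (\<lambda>t x. h t x - f t x)"
proof (rule pIj_le[OF assms(1,2,3,5)])
  fix x :: "real \<Rightarrow> 'a" assume x: "x \<in> Kset \<Theta> q j"
  have "norm (curve_int q g x - curve_int q f x)
    \<le> norm (curve_int q g x - curve_int q h x) + norm (curve_int q h x - curve_int q f x)"
    by (rule norm_diff_triangle_le) auto
  also have "\<dots> \<le> pIj \<Theta> q j (\<lambda>t x. g t x - h t x) + pIj \<Theta> q j (\<lambda>t x. h t x - f t x)"
    using curve_int_diff_le_pIj[OF assms(4,3,5) x] curve_int_diff_le_pIj[OF assms(2,4,5) x] by simp
  finally show "norm (curve_int q g x - curve_int q f x)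
    \<le> pIj \<Theta> q j (\<lambda>t x. g t x - h t x) + pIj \<Theta> q j (\<lambda>t x. h t x - f t x)" .
qed

definition sigma_open :: "modfam \<Rightarrow> (real \<Rightarrow> 'a::euclidean_space \<Rightarrow> 'b::euclidean_space) set \<Rightarrow> bool" where
  "sigma_open \<Theta> U \<longleftrightarrow> U \<subseteq> WTC \<Theta> \<and>
     (\<forall>f\<in>U. \<exists>F e. finite F \<and> F \<subseteq> {(q,j). valid_ivl q} \<and> e > 0 \<and> sigma_ball \<Theta> F e f \<subseteq> U)"

lemma istopology_sigma_open:
  "istopology (sigma_open \<Theta> :: (real \<Rightarrow> 'a::euclidean_space \<Rightarrow> 'b::euclidean_space) set \<Rightarrow> bool)"
  unfolding istopology_def
proof (intro conjI allI impI)
  fix S T :: "(real \<Rightarrow> 'a \<Rightarrow> 'b) set" assume S: "sigma_open \<Theta> S" and T: "sigma_open \<Theta> T"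
  show "sigma_open \<Theta> (S \<inter> T)"
    unfolding sigma_open_def
  proof (intro conjI ballI)
    show "S \<inter> T \<subseteq> WTC \<Theta>" using S by (auto simp: sigma_open_def)
    fix f assume "f \<in> S \<inter> T"
    then obtain F1 e1 F2 e2 where
      "finite F1" "F1 \<subseteq> {(q,j). valid_ivl q}" "e1 > 0" "sigma_ball \<Theta> F1 e1 f \<subseteq> S"
      "finite F2" "F2 \<subseteq> {(q,j). valid_ivl q}" "e2 > 0" "sigma_ball \<Theta> F2 e2 f \<subseteq> T"
      using S T unfolding sigma_open_def by blast
    moreover have "sigma_ball \<Theta> (F1 \<union> F2) (min e1 e2) f \<subseteq> sigma_ball \<Theta> F1 e1 f \<inter> sigma_ball \<Theta> F2 e2 f"
      unfolding sigma_ball_def by auto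
    ultimately show "\<exists>F e. finite F \<and> F \<subseteq> {(q,j). valid_ivl q} \<and> e > 0 \<and> sigma_ball \<Theta> F e f \<subseteq> S \<inter> T"
      by (intro exI[of _ "F1 \<union> F2"] exI[of _ "min e1 e2"]) auto
  qed
next
  fix K :: "(real \<Rightarrow> 'a \<Rightarrow> 'b) set set" assume K: "\<forall>S\<in>K. sigma_open \<Theta> S"
  show "sigma_open \<Theta> (\<Union>K)"
    unfolding sigma_open_def
  proof (intro conjI ballI)
    show "\<Union>K \<subseteq> WTC \<Theta>" using K by (auto simp: sigma_open_def)
    fix f assume "f \<in> \<Union>K"
    then obtain S where "S \<in> K" "f \<in> S" by auto
    then have "sigma_open \<Theta> S" using K by blast
    then obtain F e where "finite F" "F \<subseteq> {(q,j). valid_ivl q}" "e > 0" "sigma_ball \<Theta> F e f \<subseteq> S"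
      using \<open>f \<in> S\<close> unfolding sigma_open_def by blast
    then show "\<exists>F e. finite F \<and> F \<subseteq> {(q,j). valid_ivl q} \<and> e > 0 \<and> sigma_ball \<Theta> F e f \<subseteq> \<Union>K"
      using \<open>S \<in> K\<close> by blast
  qed
qed

lemma sigma_top_eq: "sigma_top \<Theta> = topology (sigma_open \<Theta>)"
  unfolding sigma_top_def sigma_open_def sigma_ball_def by simp

lemma openin_sigma_top: "openin (sigma_top \<Theta>) U \<longleftrightarrow> sigma_open \<Theta> U"
  unfolding sigma_top_eq by (simp add: topology_inverse'[OF istopology_sigma_open])

lemma sigma_ball_openin:
  assumes "suitable_moduli \<Theta>" "f \<in> WTC \<Theta>" "finite F" "F \<subseteq> {(q,j). valid_ivl q}"
  shows "openin (sigma_top \<Theta>) (sigma_ball \<Theta> F e f)"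
  unfolding openin_sigma_top sigma_open_def
proof (intro conjI ballI)
  show "sigma_ball \<Theta> F e f \<subseteq> WTC \<Theta>" by (auto simp: sigma_ball_def)
  fix g assume g: "g \<in> sigma_ball \<Theta> F e f"
  then have gW: "g \<in> WTC \<Theta>" and gF: "\<forall>(q,j)\<in>F. pIj \<Theta> q j (\<lambda>t x. g t x - f t x) < e"
    by (simp_all add: sigma_ball_def)
  define d where "d = Min (insert 1 ((\<lambda>(q,j). e - pIj \<Theta> q j (\<lambda>t x. g t x - f t x)) ` F))"
  have "d > 0" unfolding d_def using assms(3) gF by (subst Min_gr_iff) auto
  moreover have "sigma_ball \<Theta> F d g \<subseteq> sigma_ball \<Theta> F e f"
  proof
    fix g' assume g': "g' \<in> sigma_ball \<Theta> F d g"
    then have g'W: "g' \<in> WTC \<Theta>" by (simp add: sigma_ball_def)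
    have "pIj \<Theta> q j (\<lambda>t x. g' t x - f t x) < e" if qj: "(q,j) \<in> F" for q j
    proof -
      have vq: "valid_ivl q" using qj assms(4) by auto
      have "d \<le> e - pIj \<Theta> q j (\<lambda>t x. g t x - f t x)"
        unfolding d_def by (rule Min_le) (use qj assms(3) in force)+
      moreover have "pIj \<Theta> q j (\<lambda>t x. g' t x - g t x) < d" using g' qj by (auto simp: sigma_ball_def)
      moreover have "pIj \<Theta> q j (\<lambda>t x. g' t x - f t x)
          \<le> pIj \<Theta> q j (\<lambda>t x. g' t x - g t x) + pIj \<Theta> q j (\<lambda>t x. g t x - f t x)"
        by (rule pIj_triangle[OF assms(1,2) g'W gW vq])
      ultimately show ?thesis by linarith
    qed
    then show "g' \<in> sigma_ball \<Theta> F e f" using g'W by (auto simp: sigma_ball_def)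
  qed
  ultimately show "\<exists>F' e'. finite F' \<and> F' \<subseteq> {(q,j). valid_ivl q} \<and> e' > 0 \<and> sigma_ball \<Theta> F' e' g \<subseteq> sigma_ball \<Theta> F e f"
    using assms(3,4) by blast
qed

lemma center_in_sigma_ball:
  assumes "suitable_moduli \<Theta>" "f \<in> WTC \<Theta>" "F \<subseteq> {(q,j). valid_ivl q}" "0 < e"
  shows "f \<in> sigma_ball \<Theta> F e f"
proof -
  have "pIj \<Theta> q j (\<lambda>t x. f t x - f t x) < e" if "(q, j) \<in> F" for q j
  proof -
    have "valid_ivl q" using that assms(3) by auto
    then show ?thesis using pIj_le[OF assms(1,2,2), of q j 0] assms(4) by simp
  qed
  then show ?thesis using assms(2) by (auto simp: sigma_ball_def)
qed

lemma topspace_sigma_top: "topspace (sigma_top \<Theta>) = WTC \<Theta>"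
proof -
  have "openin (sigma_top \<Theta>) (WTC \<Theta>)"
    unfolding openin_sigma_top sigma_open_def sigma_ball_def by (auto intro!: exI[of _ "{}"] exI[of _ 1])
  then have "WTC \<Theta> \<subseteq> topspace (sigma_top \<Theta>)" by (rule openin_subset)
  moreover have "topspace (sigma_top \<Theta>) \<subseteq> WTC \<Theta>"
    using openin_topspace[of "sigma_top \<Theta>"] unfolding openin_sigma_top sigma_open_def by blast
  ultimately show ?thesis by blast
qed

lemma sigma_top_closure_subset_WTC: "(sigma_top \<Theta>) closure_of E \<subseteq> WTC \<Theta>"
  unfolding topspace_sigma_top[symmetric] by (rule closure_of_subset_topspace)

lemma continuous_map_into_sigma_top:
  fixes \<phi> :: "'x \<Rightarrow> real \<Rightarrow> 'a::euclidean_space \<Rightarrow> 'b::euclidean_space"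
  assumes into: "\<And>p. p \<in> topspace X \<Longrightarrow> \<phi> p \<in> WTC \<Theta>"
    and local: "\<And>p q j e. p \<in> topspace X \<Longrightarrow> valid_ivl q \<Longrightarrow> 0 < e \<Longrightarrow>
      \<exists>V. openin X V \<and> p \<in> V \<and> (\<forall>p'\<in>V. pIj \<Theta> q j (\<lambda>s x. \<phi> p' s x - \<phi> p s x) < e)"
  shows "continuous_map X (sigma_top \<Theta>) \<phi>"
  unfolding continuous_map
proof (intro conjI allI impI)
  show "\<phi> ` topspace X \<subseteq> topspace (sigma_top \<Theta>)" using into by (auto simp: topspace_sigma_top)
  fix U :: "(real \<Rightarrow> 'a \<Rightarrow> 'b) set" assume U: "openin (sigma_top \<Theta>) U"
  show "openin X {p \<in> topspace X. \<phi> p \<in> U}"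
  proof (subst openin_subopen, intro ballI)
    fix p assume p: "p \<in> {p \<in> topspace X. \<phi> p \<in> U}"
    then have pX: "p \<in> topspace X" by blast
    from p obtain F e where F: "finite F" "F \<subseteq> {(q,j). valid_ivl q}" "e > 0" "sigma_ball \<Theta> F e (\<phi> p) \<subseteq> U"
      using U unfolding openin_sigma_top sigma_open_def by blast
    have "\<forall>k\<in>F. \<exists>V. openin X V \<and> p \<in> V \<and> (\<forall>p'\<in>V. pIj \<Theta> (fst k) (snd k) (\<lambda>s x. \<phi> p' s x - \<phi> p s x) < e)"
    proof
      fix k assume "k \<in> F"
      then have "valid_ivl (fst k)" using F(2) by auto
      then show "\<exists>V. openin X V \<and> p \<in> V \<and> (\<forall>p'\<in>V. pIj \<Theta> (fst k) (snd k) (\<lambda>s x. \<phi> p' s x - \<phi> p s x) < e)"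
        using local[OF pX _ F(3)] by blast
    qed
    from bchoice[OF this] obtain V where V: "\<forall>k\<in>F. openin X (V k) \<and> p \<in> V k \<and>
        (\<forall>p'\<in>V k. pIj \<Theta> (fst k) (snd k) (\<lambda>s x. \<phi> p' s x - \<phi> p s x) < e)"
      by blast
    have "openin X ((\<Inter>k\<in>F. V k) \<inter> topspace X)" using F(1) V by (intro openin_INT) auto
    moreover have "(\<Inter>k\<in>F. V k) \<inter> topspace X \<subseteq> {p \<in> topspace X. \<phi> p \<in> U}"
    proof
      fix p' assume p': "p' \<in> (\<Inter>k\<in>F. V k) \<inter> topspace X"
      have "\<phi> p' \<in> sigma_ball \<Theta> F e (\<phi> p)"
        unfolding sigma_ball_def
      proof (intro CollectI conjI ballI)
        show "\<phi> p' \<in> WTC \<Theta>" using into p' by blast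
        fix k assume k: "k \<in> F"
        then have "\<forall>p''\<in>V k. pIj \<Theta> (fst k) (snd k) (\<lambda>s x. \<phi> p'' s x - \<phi> p s x) < e"
          using V by blast
        moreover have "p' \<in> V k" using p' k by blast
        ultimately show "case k of (q, j) \<Rightarrow> pIj \<Theta> q j (\<lambda>s x. \<phi> p' s x - \<phi> p s x) < e"
          by (simp add: case_prod_beta)
      qed
      then show "p' \<in> {p \<in> topspace X. \<phi> p \<in> U}" using F(4) p' by blast
    qed
    ultimately show "\<exists>T. openin X T \<and> p \<in> T \<and> T \<subseteq> {p \<in> topspace X. \<phi> p \<in> U}"
      using V pX by blast
  qed
qed

lemma integral_eq_indefinite_diff:
  fixes g :: "real \<Rightarrow> 'b::banach"
  assumes "g integrable_on {L..R}" "L \<le> a" "a \<le> b" "b \<le> R"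
  shows "integral {a..b} g = integral {L..b} g - integral {L..a} g"
proof -
  have "integral {L..a} g + integral {a..b} g = integral {L..b} g"
    by (rule Henstock_Kurzweil_Integration.integral_combine[OF assms(2,3)]) (rule integrable_subinterval_real[OF assms(1)], use assms in auto)
  then show ?thesis by (simp add: algebra_simps)
qed

lemma norm_diff_approx_le:
  fixes a b a' b' :: "'a::real_normed_vector"
  shows "norm (a - b) \<le> norm (a' - b') + norm (a - a') + norm (b - b')"
proof -
  have "a - b = (a' - b') + (a - a') - (b - b')" by simp
  then have "norm (a - b) \<le> norm ((a' - b') + (a - a')) + norm (b - b')" by (metis norm_triangle_ineq4)
  also have "\<dots> \<le> norm (a' - b') + norm (a - a') + norm (b - b')" using norm_triangle_ineq[of "a' - b'" "a - a'"] by linarith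
  finally show ?thesis .
qed

lemma WTC_integrable_along_curve:
  assumes "h \<in> WTC \<Theta>" "a \<le> b" "continuous_on {a..b} y" "\<forall>u\<in>{a..b}. norm (y u) \<le> real j"
  shows "(\<lambda>u. h u (y u)) integrable_on {a..b}"
proof -
  obtain m where "mbound h (cball 0 (real j)) m" using C2_mbound WTC_C2[OF assms(1)] by blast
  from integral_along_curve(2)[OF WTC_C1[OF assms(1)] this assms(2-4)] show ?thesis .
qed

lemma indefinite_integral_along_curve_diff_le:
  fixes h :: "real \<Rightarrow> 'a::euclidean_space \<Rightarrow> 'b::euclidean_space"
  assumes h: "C1 h" and m: "mbound h (cball 0 (real j)) m"
    and y: "continuous_on {L..R} y" "\<forall>u\<in>{L..R}. norm (y u) \<le> real j"
    and v: "v \<in> {L..R}" "v' \<in> {L..R}"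
  shows "norm (integral {L..v} (\<lambda>u. h u (y u)) - integral {L..v'} (\<lambda>u. h u (y u)))
    \<le> \<bar>integral {L..v} m - integral {L..v'} m\<bar>"
proof -
  have LR: "L \<le> R" using v by auto
  note I = integral_along_curve[OF h m]
  have le: "norm (integral {L..b} (\<lambda>u. h u (y u)) - integral {L..a} (\<lambda>u. h u (y u)))
      \<le> integral {L..b} m - integral {L..a} m"
    if ab: "a \<le> b" "a \<in> {L..R}" "b \<in> {L..R}" for a b
  proof -
    have "integral {a..b} (\<lambda>u. h u (y u)) = integral {L..b} (\<lambda>u. h u (y u)) - integral {L..a} (\<lambda>u. h u (y u))"
      by (rule integral_eq_indefinite_diff[OF I(2)[OF LR y]]) (use ab in auto)
    moreover have "integral {a..b} m = integral {L..b} m - integral {L..a} m"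
      by (rule integral_eq_indefinite_diff[OF mbound_integrable(1)[OF m]]) (use ab in auto)
    moreover have "norm (integral {a..b} (\<lambda>u. h u (y u))) \<le> integral {a..b} m"
      by (rule I(4)) (use ab y continuous_on_subset[OF y(1), of "{a..b}"] in auto)
    ultimately show ?thesis by simp
  qed
  show ?thesis
  proof (cases "v' \<le> v")
    case True
    then show ?thesis using le[OF True v(2) v(1)] by linarith
  next
    case False
    then show ?thesis using le[of v v'] v by (auto simp: norm_minus_commute)
  qed
qed

lemma AE_lborel_translate:
  assumes "AE u in lborel. P u"
  shows "AE s in lborel. P (s + t)"
proof -
  from assms obtain N where N: "{x \<in> space lborel. \<not> P x} \<subseteq> N" "emeasure lborel N = 0" "N \<in> sets lborel"
    by (rule AE_E)
  have Nb: "N \<in> sets borel" using N(3) by simp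
  have "emeasure (distr lborel borel ((+) t)) N = emeasure lborel ((+) t -` N \<inter> space lborel)"
    by (rule emeasure_distr) (use Nb in auto)
  then have "emeasure lborel ((+) t -` N) = 0" using N(2) by (simp add: lborel_distr_plus)
  moreover have "(+) t -` N \<in> sets lborel"
    using measurable_sets[of "(+) t" lborel borel N] Nb by simp
  ultimately have "(+) t -` N \<in> null_sets lborel" by (simp add: null_sets_def)
  then show ?thesis
    by (rule AE_I') (use N(1) in \<open>auto simp: add.commute\<close>)
qed

lemma L1loc_translate: "L1loc m \<Longrightarrow> L1loc (\<lambda>s. m (s + t))"
  unfolding L1loc_def
proof (intro allI)
  fix a b
  assume "\<forall>a b. set_integrable lborel {a..b} m"
  then have "integrable lborel (\<lambda>u. indicator {a+t..b+t} u *\<^sub>R m u)"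
    by (simp add: set_integrable_def)
  from lborel_integrable_real_affine[OF this, of 1 t]
  have "integrable lborel (\<lambda>s. indicator {a+t..b+t} (t + s) *\<^sub>R m (t + s))" by simp
  moreover have "(\<lambda>s. indicator {a+t..b+t} (t + s) *\<^sub>R m (t + s)) = (\<lambda>s. indicator {a..b} s *\<^sub>R m (s + t))"
    by (auto simp: indicator_def add.commute)
  ultimately show "set_integrable lborel {a..b} (\<lambda>s. m (s + t))"
    by (simp add: set_integrable_def)
qed

lemma mbound_shift: "mbound f K m \<Longrightarrow> mbound (shift t f) K (\<lambda>s. m (s + t))"
  unfolding mbound_def
  using L1loc_translate AE_lborel_translate[where P="\<lambda>u. \<forall>x\<in>K. norm (f u x) \<le> m u"]
  by (auto simp: shift_def)

lemma C1_shift: "C1 f \<Longrightarrow> C1 (shift t f)"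
proof -
  assume "C1 f"
  then have f: "case_prod f \<in> borel_measurable borel" by (simp add: C1_def)
  have "(\<lambda>p::real \<times> 'a. (fst p + t, snd p)) \<in> borel_measurable borel"
    by (intro borel_measurable_continuous_onI continuous_intros)
  from measurable_compose[OF this f]
  show "C1 (shift t f)" by (simp add: C1_def shift_def case_prod_beta)
qed

lemma C2_shift: "C2 f \<Longrightarrow> C2 (shift t f)"
  unfolding C2_def using mbound_shift by blast

lemma shift_shift: "shift t (shift s f) = shift (s + t) f"
  unfolding shift_def by (auto simp: fun_eq_iff algebra_simps)

lemma shift_0: "shift 0 f = f"
  by (simp add: shift_def)

text \<open>The curve x of Kset \<Theta> q j, translated by t and continued constantly by its end values
  outside ivl q + t: substituting u = s + t in the integral of shift t h along x yields h along it.\<close>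
definition shift_curve :: "rat \<times> rat \<Rightarrow> real \<Rightarrow> (real \<Rightarrow> 'a) \<Rightarrow> real \<Rightarrow> 'a" where
  "shift_curve q t x u = x (max (real_of_rat (fst q)) (min (real_of_rat (snd q)) (u - t)))"

lemma shift_curve_continuous:
  assumes "valid_ivl q" "x \<in> Kset \<Theta> q j"
  shows "continuous_on UNIV (shift_curve q t x)"
proof -
  have "continuous_on UNIV (\<lambda>u. max (real_of_rat (fst q)) (min (real_of_rat (snd q)) (u - t)))"
    by (intro continuous_intros)
  then show ?thesis
    unfolding shift_curve_def[abs_def]
    by (rule continuous_on_compose2[OF Kset_cont[OF assms(2)]]) (use valid_ivl_le[OF assms(1)] in \<open>auto simp: ivl_def\<close>)
qed

lemma shift_curve_bound:
  "valid_ivl q \<Longrightarrow> x \<in> Kset \<Theta> q j \<Longrightarrow> norm (shift_curve q t x u) \<le> real j"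
  unfolding shift_curve_def by (rule Kset_bound) (use valid_ivl_le in \<open>auto simp: ivl_def\<close>)

lemma shift_curve_in_Kset:
  assumes s: "suitable_moduli \<Theta>" and vq: "valid_ivl q" and vJ: "valid_ivl J"
    and sub: "ivl q \<subseteq> ivl J" and x: "x \<in> Kset \<Theta> q j"
  shows "shift_curve q t x \<in> Kset \<Theta> J j"
  unfolding Kset_def
proof (intro CollectI conjI ballI)
  show "continuous_on (ivl J) (shift_curve q t x)"
    using shift_curve_continuous[OF vq x] continuous_on_subset by blast
  show "norm (shift_curve q t x u) \<le> real j" for u by (rule shift_curve_bound[OF vq x])
next
  fix u v
  define c where "c = (\<lambda>u. max (real_of_rat (fst q)) (min (real_of_rat (snd q)) (u - t)))"
  have c: "c u \<in> ivl q" "c v \<in> ivl q" using valid_ivl_le[OF vq] by (auto simp: c_def ivl_def)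
  have "shift_curve q t x w = x (c w)" for w by (simp add: shift_curve_def c_def)
  then have "norm (shift_curve q t x v - shift_curve q t x u) \<le> \<Theta> q j \<bar>c v - c u\<bar>"
    using Kset_modulus[OF x c(1,2)] by simp
  also have "\<dots> \<le> \<Theta> q j \<bar>v - u\<bar>"
    by (rule suitable_moduli_mono[OF s vq]) (auto simp: c_def)
  also have "\<dots> \<le> \<Theta> J j \<bar>v - u\<bar>"
    by (rule suitable_moduli_subset[OF s vq vJ sub]) auto
  finally show "norm (shift_curve q t x v - shift_curve q t x u) \<le> \<Theta> J j \<bar>v - u\<bar>" .
qed

lemma shift_curve_close:
  assumes s: "suitable_moduli \<Theta>" and vq: "valid_ivl q" and x: "x \<in> Kset \<Theta> q j" and u: "u \<in> ivl q"
  shows "norm (shift_curve q t x u - x u) \<le> \<Theta> q j \<bar>t\<bar>"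
proof -
  define c where "c = max (real_of_rat (fst q)) (min (real_of_rat (snd q)) (u - t))"
  have "c \<in> ivl q" using valid_ivl_le[OF vq] by (auto simp: c_def ivl_def)
  then have "norm (shift_curve q t x u - x u) \<le> \<Theta> q j \<bar>c - u\<bar>"
    using Kset_modulus[OF x u] by (simp add: shift_curve_def c_def)
  also have "\<dots> \<le> \<Theta> q j \<bar>t\<bar>"
    by (rule suitable_moduli_mono[OF s vq]) (use u in \<open>auto simp: c_def ivl_def\<close>)
  finally show ?thesis .
qed

lemma curve_int_shift:
  assumes h: "h \<in> WTC \<Theta>" and vq: "valid_ivl q" and x: "x \<in> Kset \<Theta> q j"
  shows "curve_int q (shift t h) x =
    integral {real_of_rat (fst q) + t..real_of_rat (snd q) + t} (\<lambda>u. h u (shift_curve q t x u))"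
proof -
  define l where "l = real_of_rat (fst q)"
  define r where "r = real_of_rat (snd q)"
  obtain m where m: "mbound (shift t h) (cball 0 (real j)) m"
    using C2_mbound C2_shift WTC_C2[OF h] by blast
  have "curve_int q (shift t h) x = integral {l..r} (\<lambda>s. shift t h s (x s))"
    using integral_along_curve(3)[OF C1_shift[OF WTC_C1[OF h]] m valid_ivl_le[OF vq]]
      Kset_cont[OF x] Kset_bound[OF x] by (simp add: curve_int_def ivl_def l_def r_def)
  also have "\<dots> = integral {l..r} (\<lambda>s. (\<lambda>u. h u (shift_curve q t x u)) (s + t))"
    by (rule integral_cong) (simp add: shift_def shift_curve_def l_def r_def)
  also have "\<dots> = integral {l + t - t..r + t - t} (\<lambda>s. (\<lambda>u. h u (shift_curve q t x u)) (s + t))"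
    by simp
  also have "\<dots> = integral {l + t..r + t} (\<lambda>u. h u (shift_curve q t x u))"
    by (rule integral_shift_real_ivl)
  finally show ?thesis by (simp add: l_def r_def)
qed

text \<open>The point of this form: the interval of integration {a..b} no longer moves with t.\<close>
lemma curve_int_shift_decompose:
  assumes h: "h \<in> WTC \<Theta>" and vq: "valid_ivl q" and x: "x \<in> Kset \<Theta> q j"
    and a: "a \<le> real_of_rat (fst q) + t" and b: "real_of_rat (snd q) + t \<le> b"
  shows "curve_int q (shift t h) x =
    integral {a..b} (\<lambda>u. h u (shift_curve q t x u))
    - integral {a..real_of_rat (fst q) + t} (\<lambda>u. h u (x (real_of_rat (fst q))))
    - integral {a..b} (\<lambda>u. h u (x (real_of_rat (snd q))))
    + integral {a..real_of_rat (snd q) + t} (\<lambda>u. h u (x (real_of_rat (snd q))))"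
proof -
  define l where "l = real_of_rat (fst q)"
  define r where "r = real_of_rat (snd q)"
  define z where "z = shift_curve q t x"
  have lr: "l \<le> r" using valid_ivl_le[OF vq] by (simp add: l_def r_def)
  have ab: "a \<le> b" using a b lr by (simp add: l_def r_def)
  have xr: "norm (x r) \<le> real j" using Kset_bound[OF x] lr by (simp add: ivl_def l_def r_def)
  have hz: "(\<lambda>u. h u (z u)) integrable_on {a..b}"
    by (rule WTC_integrable_along_curve[OF h ab])
       (use continuous_on_subset[OF shift_curve_continuous[OF vq x]] shift_curve_bound[OF vq x] in \<open>auto simp: z_def\<close>)
  have hr: "(\<lambda>u. h u (x r)) integrable_on {a..b}"
    by (rule WTC_integrable_along_curve[OF h ab]) (use xr in auto)
  have zl: "integral {a..l+t} (\<lambda>u. h u (z u)) = integral {a..l+t} (\<lambda>u. h u (x l))"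
    by (rule integral_cong) (auto simp: z_def shift_curve_def l_def r_def)
  have zr: "integral {r+t..b} (\<lambda>u. h u (z u)) = integral {r+t..b} (\<lambda>u. h u (x r))"
    by (rule integral_cong) (use lr in \<open>auto simp: z_def shift_curve_def l_def r_def\<close>)
  have "integral {l+t..r+t} (\<lambda>u. h u (z u)) = integral {a..r+t} (\<lambda>u. h u (z u)) - integral {a..l+t} (\<lambda>u. h u (z u))"
    by (rule integral_eq_indefinite_diff[OF hz]) (use a b lr in \<open>auto simp: l_def r_def\<close>)
  moreover have "integral {r+t..b} (\<lambda>u. h u (z u)) = integral {a..b} (\<lambda>u. h u (z u)) - integral {a..r+t} (\<lambda>u. h u (z u))"
    by (rule integral_eq_indefinite_diff[OF hz]) (use a b lr in \<open>auto simp: l_def r_def\<close>)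
  moreover have "integral {r+t..b} (\<lambda>u. h u (x r)) = integral {a..b} (\<lambda>u. h u (x r)) - integral {a..r+t} (\<lambda>u. h u (x r))"
    by (rule integral_eq_indefinite_diff[OF hr]) (use a b lr in \<open>auto simp: l_def r_def\<close>)
  ultimately have "integral {l+t..r+t} (\<lambda>u. h u (z u)) = integral {a..b} (\<lambda>u. h u (z u))
      - integral {a..l+t} (\<lambda>u. h u (x l)) - integral {a..b} (\<lambda>u. h u (x r)) + integral {a..r+t} (\<lambda>u. h u (x r))"
    using zl zr by (simp add: algebra_simps)
  then show ?thesis using curve_int_shift[OF h vq x] by (simp add: z_def l_def r_def)
qed

lemma ex_rat_less: "\<exists>q::rat. real_of_rat q < x"
  using of_rat_dense[of "x - 1" x] by auto

lemma ex_rat_greater: "\<exists>q::rat. x < real_of_rat q"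
  using of_rat_dense[of x "x + 1"] by auto

lemma condW_tendsto:
  assumes "h \<in> WTC \<Theta>" "valid_ivl q" "\<And>n. xs n \<in> Kset \<Theta> q j" "x \<in> Kset \<Theta> q j"
    "uniform_limit (ivl q) xs x sequentially"
  shows "(\<lambda>n. curve_int q h (xs n)) \<longlonglongrightarrow> curve_int q h x"
  using WTC_condW[OF assms(1)] assms(2-5) unfolding condW_def by blast

lemma uniform_limit_const:
  assumes "c \<longlonglongrightarrow> c0"
  shows "uniform_limit S (\<lambda>n _. c n) (\<lambda>_. c0) sequentially"
proof (rule uniform_limitI)
  fix e :: real assume "e > 0"
  then have "\<forall>\<^sub>F n in sequentially. dist (c n) c0 < e" using assms tendsto_iff by blast
  then show "\<forall>\<^sub>F n in sequentially. \<forall>x\<in>S. dist (c n) c0 < e" by (rule eventually_mono) auto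
qed

lemma uniform_limit_shift_curve:
  assumes "valid_ivl q" "uniform_limit (ivl q) xs x F"
  shows "uniform_limit S (\<lambda>n. shift_curve q t (xs n)) (shift_curve q t x) F"
proof (rule uniform_limitI)
  fix e :: real assume "e > 0"
  then have "\<forall>\<^sub>F n in F. \<forall>u\<in>ivl q. dist (xs n u) (x u) < e" using assms(2) uniform_limitD by blast
  then show "\<forall>\<^sub>F n in F. \<forall>u\<in>S. dist (shift_curve q t (xs n) u) (shift_curve q t x u) < e"
    by (rule eventually_mono) (use valid_ivl_le[OF assms(1)] in \<open>auto simp: shift_curve_def ivl_def\<close>)
qed

lemma integral_const_curve_tendsto:
  fixes h :: "real \<Rightarrow> 'a::euclidean_space \<Rightarrow> 'b::euclidean_space"
  assumes s: "suitable_moduli \<Theta>" and h: "h \<in> WTC \<Theta>" and as: "real_of_rat a < s"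
    and cn: "c \<longlonglongrightarrow> c0" and cb: "\<And>n. norm (c n) \<le> real j" and c0b: "norm c0 \<le> real j"
  shows "(\<lambda>n. integral {real_of_rat a..s} (\<lambda>u. h u (c n))) \<longlonglongrightarrow> integral {real_of_rat a..s} (\<lambda>u. h u c0)"
proof (rule LIMSEQ_I)
  fix \<epsilon> :: real assume ep: "0 < \<epsilon>"
  define A where "A = real_of_rat a"
  obtain m where m: "mbound h (cball 0 (real j)) m" using C2_mbound WTC_C2[OF h] by blast
  have "continuous_on {A..s+1} (\<lambda>v. integral {A..v} m)"
    by (rule indefinite_integral_continuous_1[OF mbound_integrable(1)[OF m]])
  moreover have "s \<in> {A..s+1}" using as by (simp add: A_def)
  ultimately obtain \<delta> where d: "\<delta> > 0"
    "\<forall>v\<in>{A..s+1}. dist v s < \<delta> \<longrightarrow> dist (integral {A..v} m) (integral {A..s} m) < \<epsilon>/3"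
    using ep unfolding continuous_on_iff by (metis divide_pos_pos zero_less_numeral)
  text \<open>Condition (W) only speaks about rational intervals: approximate s from below.\<close>
  obtain \<rho> :: rat where \<rho>: "max A (s - \<delta>) < real_of_rat \<rho>" "real_of_rat \<rho> < s"
    using of_rat_dense[of "max A (s - \<delta>)" s] d(1) as by (auto simp: A_def)
  define R where "R = real_of_rat \<rho>"
  have vq: "valid_ivl (a, \<rho>)" using \<rho> by (intro valid_ivl_of_real_less) (simp add: A_def)
  have close: "norm (integral {A..s} (\<lambda>u. h u c') - integral {A..R} (\<lambda>u. h u c')) < \<epsilon>/3"
    if c': "norm c' \<le> real j" for c'
  proof -
    have "norm (integral {A..s} (\<lambda>u. h u c') - integral {A..R} (\<lambda>u. h u c'))
        \<le> \<bar>integral {A..s} m - integral {A..R} m\<bar>"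
      by (rule indefinite_integral_along_curve_diff_le[OF WTC_C1[OF h] m, of A "s+1"])
         (use c' \<rho> as in \<open>auto simp: R_def A_def\<close>)
    also have "\<dots> < \<epsilon>/3" using d(2)[rule_format, of R] \<rho> by (auto simp: R_def dist_real_def abs_minus_commute)
    finally show ?thesis .
  qed
  have Kc: "\<And>n. (\<lambda>_. c n) \<in> Kset \<Theta> (a, \<rho>) j" and Kc0: "(\<lambda>_. c0) \<in> Kset \<Theta> (a, \<rho>) j"
    using const_in_Kset[OF s vq] cb c0b by blast+
  have "(\<lambda>n. curve_int (a, \<rho>) h (\<lambda>_. c n)) \<longlonglongrightarrow> curve_int (a, \<rho>) h (\<lambda>_. c0)"
    by (rule condW_tendsto[OF h vq Kc Kc0 uniform_limit_const[OF cn]])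
  then have "(\<lambda>n. integral {A..R} (\<lambda>u. h u (c n))) \<longlonglongrightarrow> integral {A..R} (\<lambda>u. h u c0)"
    using curve_int_integral(2)[OF h vq Kc] curve_int_integral(2)[OF h vq Kc0]
    by (simp add: ivl_def A_def R_def)
  then obtain N where N: "\<forall>n\<ge>N. norm (integral {A..R} (\<lambda>u. h u (c n)) - integral {A..R} (\<lambda>u. h u c0)) < \<epsilon>/3"
    using LIMSEQ_D ep by (metis divide_pos_pos zero_less_numeral)
  show "\<exists>no. \<forall>n\<ge>no. norm (integral {real_of_rat a..s} (\<lambda>u. h u (c n)) - integral {real_of_rat a..s} (\<lambda>u. h u c0)) < \<epsilon>"
  proof (intro exI allI impI)
    fix n assume "N \<le> n"
    have "norm (integral {A..s} (\<lambda>u. h u (c n)) - integral {A..s} (\<lambda>u. h u c0))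
      \<le> norm (integral {A..R} (\<lambda>u. h u (c n)) - integral {A..R} (\<lambda>u. h u c0))
       + norm (integral {A..s} (\<lambda>u. h u (c n)) - integral {A..R} (\<lambda>u. h u (c n)))
       + norm (integral {A..s} (\<lambda>u. h u c0) - integral {A..R} (\<lambda>u. h u c0))"
      by (rule norm_diff_approx_le)
    also have "\<dots> < \<epsilon>/3 + \<epsilon>/3 + \<epsilon>/3"
      using N \<open>N \<le> n\<close> close[OF cb] close[OF c0b] by (intro add_strict_mono) auto
    finally show "norm (integral {real_of_rat a..s} (\<lambda>u. h u (c n)) - integral {real_of_rat a..s} (\<lambda>u. h u c0)) < \<epsilon>"
      by (simp add: A_def)
  qed
qed

lemma condW_shift:
  fixes h :: "real \<Rightarrow> 'a::euclidean_space \<Rightarrow> 'b::euclidean_space"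
  assumes s: "suitable_moduli \<Theta>" and h: "h \<in> WTC \<Theta>"
  shows "condW \<Theta> (shift t h)"
  unfolding condW_def
proof (intro allI impI, elim conjE)
  fix q :: "rat \<times> rat" and j :: nat and xs :: "nat \<Rightarrow> real \<Rightarrow> 'a" and x :: "real \<Rightarrow> 'a"
  assume vq: "valid_ivl q" and xs: "\<forall>n. xs n \<in> Kset \<Theta> q j" and x: "x \<in> Kset \<Theta> q j"
    and ul: "uniform_limit (ivl q) xs x sequentially"
  define l where "l = real_of_rat (fst q)"
  define r where "r = real_of_rat (snd q)"
  have lr: "l \<le> r" using valid_ivl_le[OF vq] by (simp add: l_def r_def)
  obtain a :: rat where a: "real_of_rat a < min l (l + t)"
    using ex_rat_less by blast
  obtain b :: rat where b: "max r (r + t) < real_of_rat b"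
    using ex_rat_greater by blast
  define A where "A = real_of_rat a"
  define B where "B = real_of_rat b"
  have vJ: "valid_ivl (a, b)" using a b lr by (intro valid_ivl_of_real_less) linarith
  have sub: "ivl q \<subseteq> ivl (a, b)" using a b by (auto simp: ivl_def l_def r_def)
  have dec: "curve_int q (shift t h) y =
      integral {A..B} (\<lambda>u. h u (shift_curve q t y u)) - integral {A..l + t} (\<lambda>u. h u (y l))
      - integral {A..B} (\<lambda>u. h u (y r)) + integral {A..r + t} (\<lambda>u. h u (y r))"
    if "y \<in> Kset \<Theta> q j" for y
    using curve_int_shift_decompose[OF h vq that, of A t B] a b by (simp add: A_def B_def l_def r_def)
  have zK: "\<And>y. y \<in> Kset \<Theta> q j \<Longrightarrow> shift_curve q t y \<in> Kset \<Theta> (a, b) j"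
    using shift_curve_in_Kset[OF s vq vJ sub] by blast
  have "(\<lambda>n. curve_int (a, b) h (shift_curve q t (xs n))) \<longlonglongrightarrow> curve_int (a, b) h (shift_curve q t x)"
    by (rule condW_tendsto[OF h vJ _ _ uniform_limit_shift_curve[OF vq ul]]) (use zK xs x in auto)
  then have T1: "(\<lambda>n. integral {A..B} (\<lambda>u. h u (shift_curve q t (xs n) u)))
      \<longlonglongrightarrow> integral {A..B} (\<lambda>u. h u (shift_curve q t x u))"
    using curve_int_integral(2)[OF h vJ zK[OF x]] curve_int_integral(2)[OF h vJ zK[OF xs[rule_format]]]
    by (simp add: ivl_def A_def B_def)
  have lq: "l \<in> ivl q" and rq: "r \<in> ivl q" using lr by (auto simp: ivl_def l_def r_def)
  have ptw: "\<And>u. u \<in> ivl q \<Longrightarrow> (\<lambda>n. xs n u) \<longlonglongrightarrow> x u"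
    using tendsto_uniform_limitI[OF ul] by blast
  have const: "(\<lambda>n. integral {A..s} (\<lambda>u. h u (xs n v))) \<longlonglongrightarrow> integral {A..s} (\<lambda>u. h u (x v))"
    if "v \<in> ivl q" "A < s" for v s
    using integral_const_curve_tendsto[OF s h _ ptw[OF that(1)], of a s j] that
      Kset_bound[OF xs[rule_format] that(1)] Kset_bound[OF x that(1)]
    by (simp add: A_def)
  have "(\<lambda>n. integral {A..B} (\<lambda>u. h u (shift_curve q t (xs n) u))
      - integral {A..l + t} (\<lambda>u. h u (xs n l)) - integral {A..B} (\<lambda>u. h u (xs n r))
      + integral {A..r + t} (\<lambda>u. h u (xs n r)))
    \<longlonglongrightarrow> integral {A..B} (\<lambda>u. h u (shift_curve q t x u))
      - integral {A..l + t} (\<lambda>u. h u (x l)) - integral {A..B} (\<lambda>u. h u (x r))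
      + integral {A..r + t} (\<lambda>u. h u (x r))"
    using a b lr by (intro tendsto_intros T1 const lq rq) (auto simp: A_def B_def)
  then show "(\<lambda>n. curve_int q (shift t h) (xs n)) \<longlonglongrightarrow> curve_int q (shift t h) x"
    using dec[OF x] dec[OF xs[rule_format]] by simp
qed

lemma shift_in_WTC: "suitable_moduli \<Theta> \<Longrightarrow> h \<in> WTC \<Theta> \<Longrightarrow> shift t h \<in> WTC \<Theta>"
  using C1_shift C2_shift condW_shift unfolding WTC_def by blast

lemma uniform_limit_close:
  assumes "uniform_limit S X g sequentially" "d \<longlonglongrightarrow> 0" "\<And>n u. u \<in> S \<Longrightarrow> dist (Y n u) (X n u) \<le> d n"
  shows "uniform_limit S Y g sequentially"
proof (rule uniform_limitI)
  fix e :: real assume e: "0 < e"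
  have "\<forall>\<^sub>F n in sequentially. \<forall>u\<in>S. dist (X n u) (g u) < e/2"
    by (rule uniform_limitD[OF assms(1)]) (use e in simp)
  moreover have "\<forall>\<^sub>F n in sequentially. d n < e/2"
    by (rule order_tendstoD(2)[OF assms(2)]) (use e in simp)
  ultimately show "\<forall>\<^sub>F n in sequentially. \<forall>u\<in>S. dist (Y n u) (g u) < e"
  proof eventually_elim
    case (elim n)
    show ?case
    proof
      fix u assume u: "u \<in> S"
      have "dist (Y n u) (g u) \<le> dist (Y n u) (X n u) + dist (X n u) (g u)" by (rule dist_triangle)
      moreover have "dist (X n u) (g u) < e/2" using elim u by blast
      ultimately show "dist (Y n u) (g u) < e" using assms(3)[OF u, of n] elim by linarith
    qed
  qed
qed

lemma Kset_convergent_subseq: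
  fixes X :: "nat \<Rightarrow> real \<Rightarrow> 'a::euclidean_space"
  assumes s: "suitable_moduli \<Theta>" and vq: "valid_ivl q" and X: "\<And>n. X n \<in> Kset \<Theta> q j"
  obtains g k where "g \<in> Kset \<Theta> q j" "strict_mono (k :: nat \<Rightarrow> nat)"
    "uniform_limit (ivl q) (\<lambda>n. X (k n)) g sequentially"
proof -
  have cS: "compact (ivl q)" by (simp add: ivl_def)
  obtain g k where g: "continuous_on (ivl q) g" "strict_mono (k :: nat \<Rightarrow> nat)"
    "\<And>e. 0 < e \<Longrightarrow> \<exists>N. \<forall>n x. n \<ge> N \<and> x \<in> ivl q \<longrightarrow> norm (X (k n) x - g x) < e"
  proof (rule Arzela_Ascoli[OF cS, of X "real j"])
    show "\<And>n x. x \<in> ivl q \<Longrightarrow> norm (X n x) \<le> real j" using Kset_bound[OF X] by blast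
    fix x e assume x: "x \<in> ivl q" and e: "(0::real) < e"
    obtain d where d: "d > 0" "\<And>r. 0 \<le> r \<Longrightarrow> r < d \<Longrightarrow> \<Theta> q j r < e"
      using suitable_moduli_small[OF s vq e] by blast
    show "\<exists>d>0. \<forall>n y. y \<in> ivl q \<and> norm (x - y) < d \<longrightarrow> norm (X n x - X n y) < e"
    proof (intro exI[of _ d] conjI allI impI)
      fix n y assume y: "y \<in> ivl q \<and> norm (x - y) < d"
      then have "norm (X n x - X n y) \<le> \<Theta> q j \<bar>x - y\<bar>" "\<Theta> q j \<bar>x - y\<bar> < e"
        using Kset_modulus[OF X _ x, of y n] d(2)[of "\<bar>x - y\<bar>"] by auto
      then show "norm (X n x - X n y) < e" by simp
    qed (use d in auto)
  qed blast
  have ul: "uniform_limit (ivl q) (\<lambda>n. X (k n)) g sequentially"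
    unfolding uniform_limit_sequentially_iff dist_norm using g(3) by blast
  have ptw: "\<And>u. u \<in> ivl q \<Longrightarrow> (\<lambda>n. X (k n) u) \<longlonglongrightarrow> g u"
    using tendsto_uniform_limitI[OF ul] by blast
  have "g \<in> Kset \<Theta> q j"
    unfolding Kset_def
  proof (intro CollectI conjI ballI)
    show "continuous_on (ivl q) g" by (rule g(1))
    fix u assume u: "u \<in> ivl q"
    show "norm (g u) \<le> real j"
      by (rule LIMSEQ_le_const2[OF tendsto_norm[OF ptw[OF u]]]) (use Kset_bound[OF X u] in auto)
  next
    fix u v assume u: "u \<in> ivl q" and v: "v \<in> ivl q"
    show "norm (g v - g u) \<le> \<Theta> q j \<bar>v - u\<bar>"
      by (rule LIMSEQ_le_const2[OF tendsto_norm[OF tendsto_diff[OF ptw[OF v] ptw[OF u]]]])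
         (use Kset_modulus[OF X u v] in auto)
  qed
  then show ?thesis using that g(2) ul by blast
qed

text \<open>Condition (W) upgraded, by compactness of Kset \<Theta> q j, from sequential continuity
  to uniform continuity of the curve integral.\<close>
lemma curve_int_uniformly_continuous:
  fixes h :: "real \<Rightarrow> 'a::euclidean_space \<Rightarrow> 'b::euclidean_space"
  assumes s: "suitable_moduli \<Theta>" and h: "h \<in> WTC \<Theta>" and vq: "valid_ivl q" and ep: "0 < \<epsilon>"
  shows "\<exists>\<eta>>0. \<forall>x\<in>Kset \<Theta> q j. \<forall>y\<in>Kset \<Theta> q j. (\<forall>u\<in>ivl q. norm (x u - y u) \<le> \<eta>) \<longrightarrow>
    norm (curve_int q h x - curve_int q h y) < \<epsilon>"
proof (rule ccontr)
  assume "\<not> ?thesis"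
  then have "\<forall>n::nat. \<exists>x\<in>Kset \<Theta> q j. \<exists>y\<in>Kset \<Theta> q j. (\<forall>u\<in>ivl q. norm (x u - y u) \<le> inverse (real (Suc n))) \<and>
      \<epsilon> \<le> norm (curve_int q h x - curve_int q h y)"
    by (metis inverse_positive_iff_positive of_nat_0_less_iff zero_less_Suc not_less)
  then obtain X Y where X: "\<And>n. X n \<in> Kset \<Theta> q j" and Y: "\<And>n. Y n \<in> Kset \<Theta> q j"
    and XY: "\<And>n. \<forall>u\<in>ivl q. norm (X n u - Y n u) \<le> inverse (real (Suc n))"
    and far: "\<And>n. \<epsilon> \<le> norm (curve_int q h (X n) - curve_int q h (Y n))"
    by metis
  obtain g k where g: "g \<in> Kset \<Theta> q j" and k: "strict_mono k"
    and ulX: "uniform_limit (ivl q) (\<lambda>n. X (k n)) g sequentially"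
    by (rule Kset_convergent_subseq[OF s vq X])
  have "(\<lambda>n. inverse (real (Suc (k n)))) \<longlonglongrightarrow> 0"
    using LIMSEQ_subseq_LIMSEQ[OF LIMSEQ_inverse_real_of_nat k] by (simp add: o_def)
  with ulX have ulY: "uniform_limit (ivl q) (\<lambda>n. Y (k n)) g sequentially"
    by (rule uniform_limit_close) (use XY in \<open>auto simp: dist_norm norm_minus_commute\<close>)
  have "(\<lambda>n. curve_int q h (X (k n)) - curve_int q h (Y (k n))) \<longlonglongrightarrow> curve_int q h g - curve_int q h g"
    by (intro tendsto_diff condW_tendsto[OF h vq _ g] X Y ulX ulY)
  then obtain N where "\<forall>n\<ge>N. norm (curve_int q h (X (k n)) - curve_int q h (Y (k n))) < \<epsilon>"
    using LIMSEQ_D[OF _ ep] by fastforce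
  then show False using far[of "k N"] by fastforce
qed

lemma indefinite_integral_along_curve_equicontinuous:
  fixes h :: "real \<Rightarrow> 'a::euclidean_space \<Rightarrow> 'b::euclidean_space"
  assumes h: "C1 h" and m: "mbound h (cball 0 (real j)) m" and ep: "0 < \<epsilon>"
  shows "\<exists>d>0. \<forall>y v v'. continuous_on {L..R} y \<longrightarrow> (\<forall>u\<in>{L..R}. norm (y u) \<le> real j) \<longrightarrow>
    v \<in> {L..R} \<longrightarrow> v' \<in> {L..R} \<longrightarrow> \<bar>v - v'\<bar> < d \<longrightarrow>
    norm (integral {L..v} (\<lambda>u. h u (y u)) - integral {L..v'} (\<lambda>u. h u (y u))) < \<epsilon>"
proof -
  have "uniformly_continuous_on {L..R} (\<lambda>v. integral {L..v} m)"
    by (rule compact_uniformly_continuous[OF indefinite_integral_continuous_1[OF mbound_integrable(1)[OF m]]]) simp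
  then obtain d where d: "0 < d"
    "\<forall>v\<in>{L..R}. \<forall>v'\<in>{L..R}. dist v v' < d \<longrightarrow> dist (integral {L..v} m) (integral {L..v'} m) < \<epsilon>"
    using ep unfolding uniformly_continuous_on_def by metis
  show ?thesis
  proof (intro exI[of _ d] conjI allI impI)
    fix y :: "real \<Rightarrow> 'a" and v v' assume y: "continuous_on {L..R} y" "\<forall>u\<in>{L..R}. norm (y u) \<le> real j"
        and v: "v \<in> {L..R}" "v' \<in> {L..R}" "\<bar>v - v'\<bar> < d"
    have "norm (integral {L..v} (\<lambda>u. h u (y u)) - integral {L..v'} (\<lambda>u. h u (y u)))
        \<le> \<bar>integral {L..v} m - integral {L..v'} m\<bar>"
      by (rule indefinite_integral_along_curve_diff_le[OF h m y v(1,2)])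
    also have "\<dots> < \<epsilon>" using d(2) v by (auto simp: dist_real_def)
    finally show "norm (integral {L..v} (\<lambda>u. h u (y u)) - integral {L..v'} (\<lambda>u. h u (y u))) < \<epsilon>" .
  qed (rule d(1))
qed

text \<open>Along the translated curve w, the integrals over ivl q + \<tau> and over ivl q differ by two
  short end pieces, and w is uniformly close to x by the common modulus of continuity.\<close>
lemma curve_int_shift_close:
  fixes h :: "real \<Rightarrow> 'a::euclidean_space \<Rightarrow> 'b::euclidean_space"
  assumes s: "suitable_moduli \<Theta>" and h: "h \<in> WTC \<Theta>" and vq: "valid_ivl q" and ep: "0 < \<epsilon>"
  shows "\<exists>\<delta>>0. \<forall>\<tau>. \<bar>\<tau>\<bar> < \<delta> \<longrightarrow> (\<forall>x\<in>Kset \<Theta> q j. norm (curve_int q (shift \<tau> h) x - curve_int q h x) \<le> \<epsilon>)"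
proof -
  define l where "l = real_of_rat (fst q)"
  define r where "r = real_of_rat (snd q)"
  have lr: "l \<le> r" using valid_ivl_le[OF vq] by (simp add: l_def r_def)
  have iq: "ivl q = {l..r}" by (simp add: ivl_def l_def r_def)
  obtain m where m: "mbound h (cball 0 (real j)) m" using C2_mbound WTC_C2[OF h] by blast
  obtain d1 where d1: "0 < d1" "\<forall>y v v'. continuous_on {l-1..r+1} y \<longrightarrow> (\<forall>u\<in>{l-1..r+1}. norm (y u) \<le> real j) \<longrightarrow>
      v \<in> {l-1..r+1} \<longrightarrow> v' \<in> {l-1..r+1} \<longrightarrow> \<bar>v - v'\<bar> < d1 \<longrightarrow>
      norm (integral {l-1..v} (\<lambda>u. h u (y u)) - integral {l-1..v'} (\<lambda>u. h u (y u))) < \<epsilon>/4"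
    using indefinite_integral_along_curve_equicontinuous[OF WTC_C1[OF h] m, where \<epsilon>="\<epsilon>/4" and L="l-1" and R="r+1"] ep
    by auto
  obtain \<eta> where \<eta>: "0 < \<eta>" "\<forall>x\<in>Kset \<Theta> q j. \<forall>y\<in>Kset \<Theta> q j. (\<forall>u\<in>ivl q. norm (x u - y u) \<le> \<eta>) \<longrightarrow>
      norm (curve_int q h x - curve_int q h y) < \<epsilon>/2"
    using curve_int_uniformly_continuous[OF s h vq, of "\<epsilon>/2" j] ep by auto
  obtain d2 where d2: "0 < d2" "\<And>r. 0 \<le> r \<Longrightarrow> r < d2 \<Longrightarrow> \<Theta> q j r < \<eta>"
    using suitable_moduli_small[OF s vq \<eta>(1)] by blast
  show ?thesis
  proof (intro exI[of _ "min 1 (min d1 d2)"] conjI allI impI ballI)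
    show "0 < min 1 (min d1 d2)" using d1 d2 by simp
    fix \<tau> :: real and x :: "real \<Rightarrow> 'a"
    assume \<tau>: "\<bar>\<tau>\<bar> < min 1 (min d1 d2)" and x: "x \<in> Kset \<Theta> q j"
    define w where "w = shift_curve q \<tau> x"
    have wK: "w \<in> Kset \<Theta> q j" unfolding w_def by (rule shift_curve_in_Kset[OF s vq vq subset_refl x])
    have wc: "continuous_on {l-1..r+1} w"
      using continuous_on_subset[OF shift_curve_continuous[OF vq x]] by (simp add: w_def)
    have wb: "\<forall>u\<in>{l-1..r+1}. norm (w u) \<le> real j" using shift_curve_bound[OF vq x] by (simp add: w_def)
    define G where "G = (\<lambda>v. integral {l-1..v} (\<lambda>u. h u (w u)))"
    have hw: "(\<lambda>u. h u (w u)) integrable_on {l-1..r+1}"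
      by (rule WTC_integrable_along_curve[OF h _ wc wb]) (use lr in simp)
    have G: "integral {a..b} (\<lambda>u. h u (w u)) = G b - G a" if "l - 1 \<le> a" "a \<le> b" "b \<le> r + 1" for a b
      unfolding G_def by (rule integral_eq_indefinite_diff[OF hw that])
    have "curve_int q (shift \<tau> h) x - curve_int q h w = integral {l+\<tau>..r+\<tau>} (\<lambda>u. h u (w u)) - integral {l..r} (\<lambda>u. h u (w u))"
      using curve_int_shift[OF h vq x] curve_int_integral(2)[OF h vq wK] by (simp add: w_def l_def r_def iq)
    also have "\<dots> = (G (r+\<tau>) - G r) - (G (l+\<tau>) - G l)"
      using G[of "l+\<tau>" "r+\<tau>"] G[of l r] \<tau> lr by (simp add: abs_less_iff)
    finally have split: "curve_int q (shift \<tau> h) x - curve_int q h w = (G (r+\<tau>) - G r) - (G (l+\<tau>) - G l)" .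
    have ends: "norm (G (v+\<tau>) - G v) < \<epsilon>/4" if "v \<in> {l..r}" for v
      unfolding G_def
      by (rule d1(2)[rule_format, OF wc]) (use wb that \<tau> in \<open>auto simp: abs_less_iff\<close>)
    have "\<forall>u\<in>ivl q. norm (w u - x u) \<le> \<eta>"
    proof
      fix u assume u: "u \<in> ivl q"
      have "norm (w u - x u) \<le> \<Theta> q j \<bar>\<tau>\<bar>" unfolding w_def by (rule shift_curve_close[OF s vq x u])
      also have "\<dots> < \<eta>" using d2(2)[of "\<bar>\<tau>\<bar>"] \<tau> by simp
      finally show "norm (w u - x u) \<le> \<eta>" by simp
    qed
    then have "norm (curve_int q h w - curve_int q h x) < \<epsilon>/2" using \<eta>(2) wK x by blast
    moreover have "norm (curve_int q (shift \<tau> h) x - curve_int q h x)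
        \<le> norm (G (r+\<tau>) - G r) + norm (G (l+\<tau>) - G l) + norm (curve_int q h w - curve_int q h x)"
    proof -
      have "curve_int q (shift \<tau> h) x - curve_int q h x
          = ((G (r+\<tau>) - G r) - (G (l+\<tau>) - G l)) + (curve_int q h w - curve_int q h x)"
        using split by (simp add: algebra_simps)
      then have "norm (curve_int q (shift \<tau> h) x - curve_int q h x)
          \<le> norm ((G (r+\<tau>) - G r) - (G (l+\<tau>) - G l)) + norm (curve_int q h w - curve_int q h x)"
        by (metis norm_triangle_ineq)
      then show ?thesis using norm_triangle_ineq4[of "G (r+\<tau>) - G r" "G (l+\<tau>) - G l"] by linarith
    qed
    ultimately show "norm (curve_int q (shift \<tau> h) x - curve_int q h x) \<le> \<epsilon>"
      using ends[of l] ends[of r] lr by auto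
  qed
qed

lemma integral_small_from_rational:
  fixes g :: "real \<Rightarrow> 'b::banach"
  assumes gi: "g integrable_on {L..R}"
    and rat: "\<And>\<rho>1 \<rho>2 :: rat. L \<le> real_of_rat \<rho>1 \<Longrightarrow> real_of_rat \<rho>1 < real_of_rat \<rho>2 \<Longrightarrow> real_of_rat \<rho>2 \<le> R \<Longrightarrow>
      real_of_rat \<rho>2 - real_of_rat \<rho>1 < \<delta> \<Longrightarrow> norm (integral {real_of_rat \<rho>1..real_of_rat \<rho>2} g) \<le> \<epsilon>"
    and s: "L < s1" "s1 \<le> s2" "s2 < R" "s2 - s1 < \<delta>"
  shows "norm (integral {s1..s2} g) \<le> \<epsilon>"
proof -
  define G where "G = (\<lambda>v. integral {L..v} g)"
  have Gc: "continuous_on {L..R} G" unfolding G_def by (rule indefinite_integral_continuous_1[OF gi])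
  have Gd: "integral {a..b} g = G b - G a" if "L \<le> a" "a \<le> b" "b \<le> R" for a b
    unfolding G_def by (rule integral_eq_indefinite_diff[OF gi that])
  show ?thesis
  proof (rule field_le_epsilon)
    fix \<eta> :: real assume \<eta>: "0 < \<eta>"
    have s12: "s1 \<in> {L..R}" "s2 \<in> {L..R}" using s by auto
    obtain d1 where d1: "0 < d1" "\<forall>v\<in>{L..R}. dist v s1 < d1 \<longrightarrow> dist (G v) (G s1) < \<eta>/2"
      using Gc s12(1) \<eta> unfolding continuous_on_iff by (metis half_gt_zero)
    obtain d2 where d2: "0 < d2" "\<forall>v\<in>{L..R}. dist v s2 < d2 \<longrightarrow> dist (G v) (G s2) < \<eta>/2"
      using Gc s12(2) \<eta> unfolding continuous_on_iff by (metis half_gt_zero)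
    define gap where "gap = (\<delta> - (s2 - s1)) / 2"
    have gap: "0 < gap" "s2 - s1 + 2 * gap = \<delta>" using s by (auto simp: gap_def field_simps)
    define \<gamma> where "\<gamma> = min (min d1 d2) (min gap (min (s1 - L) (R - s2)))"
    have \<gamma>: "0 < \<gamma>" "\<gamma> \<le> d1" "\<gamma> \<le> d2" "\<gamma> \<le> gap" "\<gamma> \<le> s1 - L" "\<gamma> \<le> R - s2"
      unfolding \<gamma>_def using d1(1) d2(1) gap(1) s by auto
    obtain \<rho>1 :: rat where \<rho>1: "s1 - \<gamma> < real_of_rat \<rho>1" "real_of_rat \<rho>1 < s1"
      using of_rat_dense[of "s1 - \<gamma>" s1] \<gamma>(1) by auto
    obtain \<rho>2 :: rat where \<rho>2: "s2 < real_of_rat \<rho>2" "real_of_rat \<rho>2 < s2 + \<gamma>"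
      using of_rat_dense[of s2 "s2 + \<gamma>"] \<gamma>(1) by auto
    have \<rho>: "L \<le> real_of_rat \<rho>1" "real_of_rat \<rho>1 < real_of_rat \<rho>2" "real_of_rat \<rho>2 \<le> R"
        "real_of_rat \<rho>2 - real_of_rat \<rho>1 < \<delta>"
      using \<rho>1 \<rho>2 \<gamma> gap(2) s by linarith+
    then have "norm (G (real_of_rat \<rho>2) - G (real_of_rat \<rho>1)) \<le> \<epsilon>"
      using rat[OF \<rho>] Gd[of "real_of_rat \<rho>1" "real_of_rat \<rho>2"] by simp
    moreover have "norm (G (real_of_rat \<rho>1) - G s1) < \<eta>/2"
      using d1(2) \<rho> \<rho>1 \<gamma> by (simp add: dist_norm dist_real_def)
    moreover have "norm (G (real_of_rat \<rho>2) - G s2) < \<eta>/2"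
      using d2(2) \<rho> \<rho>2 \<gamma> by (simp add: dist_norm dist_real_def)
    moreover have "norm (G s1 - G s2) \<le> norm (G (real_of_rat \<rho>1) - G (real_of_rat \<rho>2))
        + norm (G s1 - G (real_of_rat \<rho>1)) + norm (G s2 - G (real_of_rat \<rho>2))"
      by (rule norm_diff_approx_le)
    ultimately show "norm (integral {s1..s2} g) \<le> \<epsilon> + \<eta>"
      using Gd[of s1 s2] s by (simp add: norm_minus_commute)
  qed
qed

text \<open>Closeness to E is seen only through the seminorms, i.e. on rational intervals; real
  endpoints follow by continuity of the indefinite integral.\<close>
lemma closure_short_integrals_small:
  fixes E :: "(real \<Rightarrow> 'a::euclidean_space \<Rightarrow> 'b::euclidean_space) set"
  assumes s: "suitable_moduli \<Theta>" and EW: "E \<subseteq> WTC \<Theta>" and eq: "equicont_mbounds E" and ep: "0 < \<epsilon>"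
  shows "\<exists>\<delta>>0. \<forall>f \<in> (sigma_top \<Theta>) closure_of E. \<forall>s1 s2 c. -R \<le> s1 \<and> s1 \<le> s2 \<and> s2 \<le> R \<and> s2 - s1 < \<delta> \<and>
      norm c \<le> real j \<longrightarrow> norm (integral {s1..s2} (\<lambda>u. f u c)) \<le> \<epsilon>"
proof -
  obtain mb where mb: "\<forall>f\<in>E. mbound f (cball 0 (real j)) (mb f)" and eqc: "L1loc_equicont (mb ` E)"
    using eq unfolding equicont_mbounds_def by blast
  define r where "r = \<bar>R\<bar> + 1"
  have "0 < r" by (simp add: r_def)
  moreover have "\<forall>r>0. \<forall>e>0. \<exists>d>0. \<forall>m\<in>mb ` E. \<forall>s t. -r \<le> s \<and> s \<le> t \<and> t \<le> r \<and> t - s < d \<longrightarrow>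
      (LINT u:{s..t}|lborel. m u) < e"
    using eqc unfolding L1loc_equicont_def by blast
  ultimately obtain \<delta> where \<delta>: "0 < \<delta>" "\<forall>m\<in>mb ` E. \<forall>s t. -r \<le> s \<and> s \<le> t \<and> t \<le> r \<and> t - s < \<delta> \<longrightarrow>
      (LINT u:{s..t}|lborel. m u) < \<epsilon>/2"
    using half_gt_zero[OF ep] by blast
  have rational: "norm (integral {real_of_rat \<rho>1..real_of_rat \<rho>2} (\<lambda>u. f u c)) \<le> \<epsilon>"
    if f: "f \<in> (sigma_top \<Theta>) closure_of E" and \<rho>: "-r \<le> real_of_rat \<rho>1" "real_of_rat \<rho>1 < real_of_rat \<rho>2"
      "real_of_rat \<rho>2 \<le> r" "real_of_rat \<rho>2 - real_of_rat \<rho>1 < \<delta>" and c: "norm c \<le> real j" for f \<rho>1 \<rho>2 c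
  proof -
    have fW: "f \<in> WTC \<Theta>" using f sigma_top_closure_subset_WTC by blast
    define q where "q = (\<rho>1, \<rho>2)"
    have vq: "valid_ivl q" using \<rho> by (simp add: q_def valid_ivl_of_real_less)
    have Fv: "{(q, j)} \<subseteq> {(q,j). valid_ivl q}" using vq by simp
    obtain g where g: "g \<in> E" "g \<in> sigma_ball \<Theta> {(q, j)} (\<epsilon>/2) f"
      using f sigma_ball_openin[OF s fW _ Fv] center_in_sigma_ball[OF s fW Fv] ep
      unfolding in_closure_of by (metis finite.emptyI finite_insert half_gt_zero)
    have gW: "g \<in> WTC \<Theta>" using g EW by auto
    have cK: "(\<lambda>_. c) \<in> Kset \<Theta> q j" by (rule const_in_Kset[OF s vq c])
    have "norm (curve_int q g (\<lambda>_. c) - curve_int q f (\<lambda>_. c)) < \<epsilon>/2"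
      using curve_int_diff_le_pIj[OF fW gW vq cK] g(2) by (auto simp: sigma_ball_def)
    moreover have "norm (curve_int q g (\<lambda>_. c)) < \<epsilon>/2"
    proof -
      have mg: "mbound g (cball 0 (real j)) (mb g)" using mb g(1) by blast
      have "norm (curve_int q g (\<lambda>_. c)) \<le> (LINT u:{real_of_rat \<rho>1..real_of_rat \<rho>2}|lborel. mb g u)"
        using integral_along_curve(4)[OF WTC_C1[OF gW] mg, of "real_of_rat \<rho>1" "real_of_rat \<rho>2" "\<lambda>_. c"]
          curve_int_integral(2)[OF gW vq cK] mbound_integrable(2)[OF mg] \<rho> c
        by (simp add: q_def ivl_def)
      also have "\<dots> < \<epsilon>/2" using \<delta>(2) g(1) \<rho> by simp
      finally show ?thesis .
    qed
    ultimately have "norm (curve_int q f (\<lambda>_. c)) \<le> \<epsilon>"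
      using norm_triangle_sub[of "curve_int q f (\<lambda>_. c)" "curve_int q g (\<lambda>_. c)"]
      by (simp add: norm_minus_commute)
    then show ?thesis using curve_int_integral(2)[OF fW vq cK] by (simp add: q_def ivl_def)
  qed
  show ?thesis
  proof (intro exI[of _ \<delta>] conjI ballI allI impI)
    fix f s1 s2 and c :: 'a
    assume f: "f \<in> (sigma_top \<Theta>) closure_of E"
      and ss: "-R \<le> s1 \<and> s1 \<le> s2 \<and> s2 \<le> R \<and> s2 - s1 < \<delta> \<and> norm c \<le> real j"
    have fW: "f \<in> WTC \<Theta>" using f sigma_top_closure_subset_WTC by blast
    show "norm (integral {s1..s2} (\<lambda>u. f u c)) \<le> \<epsilon>"
    proof (rule integral_small_from_rational[of _ "-r" r \<delta>])
      show "(\<lambda>u. f u c) integrable_on {-r..r}"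
        by (rule WTC_integrable_along_curve[OF fW]) (use ss in \<open>auto simp: r_def\<close>)
    qed (use rational[OF f] ss in \<open>auto simp: r_def\<close>)
  qed (rule \<delta>(1))
qed

lemma norm_indefinite_integral_diff:
  fixes g :: "real \<Rightarrow> 'b::banach"
  assumes gi: "g integrable_on {A..max s \<rho>}" and "A \<le> s" "A \<le> \<rho>"
  shows "norm (integral {A..s} g - integral {A..\<rho>} g) = norm (integral {min s \<rho>..max s \<rho>} g)"
proof (cases "\<rho> \<le> s")
  case True
  then show ?thesis using integral_eq_indefinite_diff[OF gi, of \<rho> s] assms by simp
next
  case False
  then show ?thesis
    using integral_eq_indefinite_diff[OF gi, of s \<rho>] assms by (simp add: norm_minus_commute)
qed

lemma integral_const_curve_diff_le:
  fixes f f0 :: "real \<Rightarrow> 'a::euclidean_space \<Rightarrow> 'b::euclidean_space"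
  assumes s: "suitable_moduli \<Theta>" and fW: "f \<in> WTC \<Theta>" and f0W: "f0 \<in> WTC \<Theta>"
    and a\<rho>: "real_of_rat a < real_of_rat \<rho>" and as: "real_of_rat a \<le> s'" and c: "norm c \<le> real j"
    and f_short: "norm (integral {min s' (real_of_rat \<rho>)..max s' (real_of_rat \<rho>)} (\<lambda>u. f u c)) \<le> \<eta>"
    and f0_short: "norm (integral {min s' (real_of_rat \<rho>)..max s' (real_of_rat \<rho>)} (\<lambda>u. f0 u c)) \<le> \<eta>"
  shows "norm (integral {real_of_rat a..s'} (\<lambda>u. f u c) - integral {real_of_rat a..s'} (\<lambda>u. f0 u c))
    \<le> pIj \<Theta> (a, \<rho>) j (\<lambda>t x. f t x - f0 t x) + 2 * \<eta>"
proof -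
  define A where "A = real_of_rat a"
  define P where "P = real_of_rat \<rho>"
  have vq: "valid_ivl (a, \<rho>)" using a\<rho> by (rule valid_ivl_of_real_less)
  have cK: "(\<lambda>_. c) \<in> Kset \<Theta> (a, \<rho>) j" by (rule const_in_Kset[OF s vq c])
  have seminorm: "norm (integral {A..P} (\<lambda>u. f u c) - integral {A..P} (\<lambda>u. f0 u c)) \<le> pIj \<Theta> (a, \<rho>) j (\<lambda>t x. f t x - f0 t x)"
    using curve_int_diff_le_pIj[OF f0W fW vq cK] curve_int_integral(2)[OF fW vq cK] curve_int_integral(2)[OF f0W vq cK]
    by (simp add: ivl_def A_def P_def)
  have short: "norm (integral {A..s'} (\<lambda>u. g u c) - integral {A..P} (\<lambda>u. g u c)) \<le> \<eta>"
    if "g \<in> WTC \<Theta>" "norm (integral {min s' P..max s' P} (\<lambda>u. g u c)) \<le> \<eta>" for g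
  proof -
    have "(\<lambda>u. g u c) integrable_on {A..max s' P}"
      by (rule WTC_integrable_along_curve[OF that(1)]) (use as a\<rho> c in \<open>auto simp: A_def P_def\<close>)
    then show ?thesis
      using norm_indefinite_integral_diff[of "\<lambda>u. g u c" A s' P] that(2) as a\<rho> by (simp add: A_def P_def)
  qed
  have "norm (integral {A..s'} (\<lambda>u. f u c) - integral {A..s'} (\<lambda>u. f0 u c))
      \<le> norm (integral {A..P} (\<lambda>u. f u c) - integral {A..P} (\<lambda>u. f0 u c))
       + norm (integral {A..s'} (\<lambda>u. f u c) - integral {A..P} (\<lambda>u. f u c))
       + norm (integral {A..s'} (\<lambda>u. f0 u c) - integral {A..P} (\<lambda>u. f0 u c))"
    by (rule norm_diff_approx_le)
  then show ?thesis
    using seminorm short[OF fW f_short[folded P_def]] short[OF f0W f0_short[folded P_def]]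
    by (simp add: A_def)
qed

lemma curve_int_shift_diff_le:
  fixes f f0 :: "real \<Rightarrow> 'a::euclidean_space \<Rightarrow> 'b::euclidean_space"
  assumes fW: "f \<in> WTC \<Theta>" and f0W: "f0 \<in> WTC \<Theta>" and vq: "valid_ivl q" and x: "x \<in> Kset \<Theta> q j"
    and A: "A \<le> real_of_rat (fst q) + t" and B: "real_of_rat (snd q) + t \<le> B"
  defines "l \<equiv> real_of_rat (fst q)" and "r \<equiv> real_of_rat (snd q)"
  shows "norm (curve_int q (shift t f) x - curve_int q (shift t f0) x) \<le>
      norm (integral {A..B} (\<lambda>u. f u (shift_curve q t x u)) - integral {A..B} (\<lambda>u. f0 u (shift_curve q t x u)))
    + norm (integral {A..l + t} (\<lambda>u. f u (x l)) - integral {A..l + t} (\<lambda>u. f0 u (x l)))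
    + norm (integral {A..B} (\<lambda>u. f u (x r)) - integral {A..B} (\<lambda>u. f0 u (x r)))
    + norm (integral {A..r + t} (\<lambda>u. f u (x r)) - integral {A..r + t} (\<lambda>u. f0 u (x r)))"
proof -
  have "curve_int q (shift t f) x - curve_int q (shift t f0) x =
      (integral {A..B} (\<lambda>u. f u (shift_curve q t x u)) - integral {A..B} (\<lambda>u. f0 u (shift_curve q t x u)))
    - (integral {A..l + t} (\<lambda>u. f u (x l)) - integral {A..l + t} (\<lambda>u. f0 u (x l)))
    - (integral {A..B} (\<lambda>u. f u (x r)) - integral {A..B} (\<lambda>u. f0 u (x r)))
    + (integral {A..r + t} (\<lambda>u. f u (x r)) - integral {A..r + t} (\<lambda>u. f0 u (x r)))"
    unfolding curve_int_shift_decompose[OF fW vq x A B] curve_int_shift_decompose[OF f0W vq x A B] l_def r_def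
    by (simp add: algebra_simps)
  then show ?thesis
    by (smt (verit) norm_triangle_ineq norm_triangle_ineq4)
qed

lemma pIj_shift_diff_le:
  fixes f f0 :: "real \<Rightarrow> 'a::euclidean_space \<Rightarrow> 'b::euclidean_space" and q :: "rat \<times> rat"
  defines "l \<equiv> real_of_rat (fst q)" and "r \<equiv> real_of_rat (snd q)"
  assumes s: "suitable_moduli \<Theta>" and fW: "f \<in> WTC \<Theta>" and f0W: "f0 \<in> WTC \<Theta>" and vq: "valid_ivl q"
    and a: "real_of_rat a \<le> min l (l + t)" and b: "max r (r + t) \<le> real_of_rat b"
    and a\<rho>: "real_of_rat a < real_of_rat \<rho>1" "real_of_rat a < real_of_rat \<rho>2"
    and short: "\<And>g c. g \<in> {f, f0} \<Longrightarrow> norm c \<le> real j \<Longrightarrow>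
      norm (integral {min (l + t) (real_of_rat \<rho>1)..max (l + t) (real_of_rat \<rho>1)} (\<lambda>u. g u c)) \<le> \<eta> \<and>
      norm (integral {min (r + t) (real_of_rat \<rho>2)..max (r + t) (real_of_rat \<rho>2)} (\<lambda>u. g u c)) \<le> \<eta>"
  shows "pIj \<Theta> q j (\<lambda>s x. shift t f s x - shift t f0 s x) \<le> 2 * pIj \<Theta> (a, b) j (\<lambda>t x. f t x - f0 t x)
    + pIj \<Theta> (a, \<rho>1) j (\<lambda>t x. f t x - f0 t x) + pIj \<Theta> (a, \<rho>2) j (\<lambda>t x. f t x - f0 t x) + 4 * \<eta>"
proof (rule pIj_le[OF s shift_in_WTC[OF s f0W] shift_in_WTC[OF s fW] vq])
  define A where "A = real_of_rat a"
  define B where "B = real_of_rat b"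
  have lr: "l < r" using vq by (simp add: valid_ivl_def of_rat_less l_def r_def)
  have vJ: "valid_ivl (a, b)" using a b lr by (intro valid_ivl_of_real_less) linarith
  fix x :: "real \<Rightarrow> 'a" assume x: "x \<in> Kset \<Theta> q j"
  have xl: "norm (x l) \<le> real j" and xr: "norm (x r) \<le> real j"
    using Kset_bound[OF x] lr by (auto simp: ivl_def l_def r_def)
  have on_ab: "norm (integral {A..B} (\<lambda>u. f u (y u)) - integral {A..B} (\<lambda>u. f0 u (y u)))
      \<le> pIj \<Theta> (a, b) j (\<lambda>t x. f t x - f0 t x)"
    if "y \<in> Kset \<Theta> (a, b) j" for y :: "real \<Rightarrow> 'a"
    using curve_int_diff_le_pIj[OF f0W fW vJ that] curve_int_integral(2)[OF fW vJ that]
      curve_int_integral(2)[OF f0W vJ that]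
    by (simp add: ivl_def A_def B_def)
  have "ivl q \<subseteq> ivl (a, b)" using a b by (auto simp: ivl_def l_def r_def)
  note T1 = on_ab[OF shift_curve_in_Kset[OF s vq vJ this x, of t]]
  note T3 = on_ab[OF const_in_Kset[OF s vJ xr]]
  have T2: "norm (integral {A..l + t} (\<lambda>u. f u (x l)) - integral {A..l + t} (\<lambda>u. f0 u (x l)))
      \<le> pIj \<Theta> (a, \<rho>1) j (\<lambda>t x. f t x - f0 t x) + 2 * \<eta>"
    using integral_const_curve_diff_le[OF s fW f0W a\<rho>(1) _ xl] a short[OF _ xl] by (simp add: A_def)
  have T4: "norm (integral {A..r + t} (\<lambda>u. f u (x r)) - integral {A..r + t} (\<lambda>u. f0 u (x r)))
      \<le> pIj \<Theta> (a, \<rho>2) j (\<lambda>t x. f t x - f0 t x) + 2 * \<eta>"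
    using integral_const_curve_diff_le[OF s fW f0W a\<rho>(2) _ xr] a lr short[OF _ xr] by (simp add: A_def)
  show "norm (curve_int q (shift t f) x - curve_int q (shift t f0) x)
    \<le> 2 * pIj \<Theta> (a, b) j (\<lambda>t x. f t x - f0 t x) + pIj \<Theta> (a, \<rho>1) j (\<lambda>t x. f t x - f0 t x)
      + pIj \<Theta> (a, \<rho>2) j (\<lambda>t x. f t x - f0 t x) + 4 * \<eta>"
    using curve_int_shift_diff_le[OF fW f0W vq x, of A t B] a b T1 T2 T3 T4
    by (simp add: A_def B_def l_def r_def)
qed

lemma pIj_shift_diff_small:
  fixes E :: "(real \<Rightarrow> 'a::euclidean_space \<Rightarrow> 'b::euclidean_space) set"
  assumes s: "suitable_moduli \<Theta>" and EW: "E \<subseteq> WTC \<Theta>" and eq: "equicont_mbounds E"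
    and f0: "f0 \<in> (sigma_top \<Theta>) closure_of E" and vq: "valid_ivl q" and ep: "0 < \<epsilon>"
  shows "\<exists>\<gamma>>0. \<exists>F e. finite F \<and> F \<subseteq> {(q,j). valid_ivl q} \<and> 0 < e \<and>
    (\<forall>t f. \<bar>t - t0\<bar> < \<gamma> \<longrightarrow> f \<in> (sigma_top \<Theta>) closure_of E \<longrightarrow> f \<in> sigma_ball \<Theta> F e f0 \<longrightarrow>
       pIj \<Theta> q j (\<lambda>s x. shift t f s x - shift t f0 s x) \<le> \<epsilon>)"
proof -
  have f0W: "f0 \<in> WTC \<Theta>" using f0 sigma_top_closure_subset_WTC by blast
  define l where "l = real_of_rat (fst q)"
  define r where "r = real_of_rat (snd q)"
  have lr: "l \<le> r" using valid_ivl_le[OF vq] by (simp add: l_def r_def)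
  obtain a :: rat where a: "real_of_rat a < min l (l + t0) - 2" using ex_rat_less by blast
  obtain b :: rat where b: "max r (r + t0) + 2 < real_of_rat b" using ex_rat_greater by blast
  define A where "A = real_of_rat a"
  define B where "B = real_of_rat b"
  define R where "R = \<bar>A\<bar> + \<bar>B\<bar>"
  obtain \<delta> where \<delta>: "0 < \<delta>" "\<forall>f \<in> (sigma_top \<Theta>) closure_of E. \<forall>s1 s2 c. -R \<le> s1 \<and> s1 \<le> s2 \<and> s2 \<le> R \<and>
      s2 - s1 < \<delta> \<and> norm c \<le> real j \<longrightarrow> norm (integral {s1..s2} (\<lambda>u. f u c)) \<le> \<epsilon>/8"
    using closure_short_integrals_small[OF s EW eq, of "\<epsilon>/8" R j] ep by auto
  have short: "norm (integral {min v w..max v w} (\<lambda>u. g u c)) \<le> \<epsilon>/8"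
    if "g \<in> (sigma_top \<Theta>) closure_of E" "norm c \<le> real j" "v \<in> {A..B}" "w \<in> {A..B}" "\<bar>v - w\<bar> < \<delta>"
    for g c v w
  proof -
    have "-R \<le> min v w" "min v w \<le> max v w" "max v w \<le> R" "max v w - min v w < \<delta>"
      using that(3-5) by (auto simp: R_def)
    then show ?thesis using \<delta>(2) that(1,2) by blast
  qed
  define \<gamma> where "\<gamma> = min 1 (\<delta>/2)"
  have \<gamma>: "0 < \<gamma>" "\<gamma> \<le> 1" "2 * \<gamma> \<le> \<delta>" using \<delta>(1) by (auto simp: \<gamma>_def)
  obtain \<rho>1 :: rat where \<rho>1: "l + t0 - \<gamma> < real_of_rat \<rho>1" "real_of_rat \<rho>1 < l + t0"
    using of_rat_dense[of "l + t0 - \<gamma>" "l + t0"] \<gamma>(1) by auto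
  obtain \<rho>2 :: rat where \<rho>2: "r + t0 - \<gamma> < real_of_rat \<rho>2" "real_of_rat \<rho>2 < r + t0"
    using of_rat_dense[of "r + t0 - \<gamma>" "r + t0"] \<gamma>(1) by auto
  have vJ: "valid_ivl (a, b)" using a b lr by (intro valid_ivl_of_real_less) linarith
  have a\<rho>: "real_of_rat a < real_of_rat \<rho>1" "real_of_rat a < real_of_rat \<rho>2" using a \<rho>1 \<rho>2 \<gamma> lr by linarith+
  define F where "F = {((a, b), j), ((a, \<rho>1), j), ((a, \<rho>2), j)}"
  have Fv: "F \<subseteq> {(q,j). valid_ivl q}" using vJ a\<rho> by (auto simp: F_def intro: valid_ivl_of_real_less)
  have "pIj \<Theta> q j (\<lambda>s x. shift t f s x - shift t f0 s x) \<le> \<epsilon>"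
    if t: "\<bar>t - t0\<bar> < \<gamma>" and f: "f \<in> (sigma_top \<Theta>) closure_of E" and near: "f \<in> sigma_ball \<Theta> F (\<epsilon>/8) f0"
    for t and f :: "real \<Rightarrow> 'a \<Rightarrow> 'b"
  proof -
    have fW: "f \<in> WTC \<Theta>" using f sigma_top_closure_subset_WTC by blast
    have "pIj \<Theta> (a, b) j (\<lambda>t x. f t x - f0 t x) < \<epsilon>/8"
      "pIj \<Theta> (a, \<rho>1) j (\<lambda>t x. f t x - f0 t x) < \<epsilon>/8" "pIj \<Theta> (a, \<rho>2) j (\<lambda>t x. f t x - f0 t x) < \<epsilon>/8"
      using near by (auto simp: sigma_ball_def F_def)
    moreover have "pIj \<Theta> q j (\<lambda>s x. shift t f s x - shift t f0 s x) \<le> 2 * pIj \<Theta> (a, b) j (\<lambda>t x. f t x - f0 t x)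
        + pIj \<Theta> (a, \<rho>1) j (\<lambda>t x. f t x - f0 t x) + pIj \<Theta> (a, \<rho>2) j (\<lambda>t x. f t x - f0 t x) + 4 * (\<epsilon>/8)"
    proof (rule pIj_shift_diff_le[OF s fW f0W vq _ _ a\<rho>, folded l_def r_def])
      show "real_of_rat a \<le> min l (l + t)" "max r (r + t) \<le> real_of_rat b" using a b t \<gamma> by auto
      fix g and c :: 'a assume "g \<in> {f, f0}" "norm c \<le> real j"
      moreover have "g \<in> (sigma_top \<Theta>) closure_of E" using \<open>g \<in> {f, f0}\<close> f f0 by blast
      moreover have "l + t \<in> {A..B}" "real_of_rat \<rho>1 \<in> {A..B}" "\<bar>l + t - real_of_rat \<rho>1\<bar> < \<delta>"
        "r + t \<in> {A..B}" "real_of_rat \<rho>2 \<in> {A..B}" "\<bar>r + t - real_of_rat \<rho>2\<bar> < \<delta>"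
        using a b t \<rho>1 \<rho>2 \<gamma> lr by (auto simp: A_def B_def abs_less_iff)
      ultimately show "norm (integral {min (l + t) (real_of_rat \<rho>1)..max (l + t) (real_of_rat \<rho>1)} (\<lambda>u. g u c)) \<le> \<epsilon>/8 \<and>
          norm (integral {min (r + t) (real_of_rat \<rho>2)..max (r + t) (real_of_rat \<rho>2)} (\<lambda>u. g u c)) \<le> \<epsilon>/8"
        using short by blast
    qed
    ultimately show ?thesis by linarith
  qed
  then show ?thesis using \<gamma>(1) Fv ep by (intro exI[of _ \<gamma>] conjI exI[of _ F] exI[of _ "\<epsilon>/8"]) (auto simp: F_def)
qed

lemma shift_locally_close:
  fixes E :: "(real \<Rightarrow> 'a::euclidean_space \<Rightarrow> 'b::euclidean_space) set"
  assumes s: "suitable_moduli \<Theta>" and EW: "E \<subseteq> WTC \<Theta>" and eq: "equicont_mbounds E"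
    and f0: "f0 \<in> (sigma_top \<Theta>) closure_of E" and vq: "valid_ivl q" and ep: "0 < \<epsilon>"
  shows "\<exists>V. openin (prod_topology euclideanreal (subtopology (sigma_top \<Theta>) ((sigma_top \<Theta>) closure_of E))) V \<and>
    (t0, f0) \<in> V \<and> (\<forall>(t, f)\<in>V. pIj \<Theta> q j (\<lambda>s x. shift t f s x - shift t0 f0 s x) < \<epsilon>)"
proof -
  define C where "C = (sigma_top \<Theta>) closure_of E"
  have f0W: "f0 \<in> WTC \<Theta>" using f0 sigma_top_closure_subset_WTC by blast
  have h0W: "shift t0 f0 \<in> WTC \<Theta>" by (rule shift_in_WTC[OF s f0W])
  obtain \<delta> where \<delta>: "0 < \<delta>" "\<forall>\<tau>. \<bar>\<tau>\<bar> < \<delta> \<longrightarrow>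
      (\<forall>x\<in>Kset \<Theta> q j. norm (curve_int q (shift \<tau> (shift t0 f0)) x - curve_int q (shift t0 f0) x) \<le> \<epsilon>/4)"
    using curve_int_shift_close[OF s h0W vq, of "\<epsilon>/4" j] ep by auto
  obtain \<gamma> F e where \<gamma>: "0 < \<gamma>" and F: "finite F" "F \<subseteq> {(q,j). valid_ivl q}" and e: "0 < e"
    and close: "\<forall>t f. \<bar>t - t0\<bar> < \<gamma> \<longrightarrow> f \<in> C \<longrightarrow> f \<in> sigma_ball \<Theta> F e f0 \<longrightarrow>
       pIj \<Theta> q j (\<lambda>s x. shift t f s x - shift t f0 s x) \<le> \<epsilon>/2"
    using pIj_shift_diff_small[OF s EW eq f0 vq, of "\<epsilon>/2" t0 j] ep unfolding C_def by auto
  define V where "V = ball t0 (min \<delta> \<gamma>) \<times> (C \<inter> sigma_ball \<Theta> F e f0)"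
  have "openin (prod_topology euclideanreal (subtopology (sigma_top \<Theta>) C)) V"
    unfolding V_def openin_prod_Times_iff
    using openin_subtopology_Int2[OF sigma_ball_openin[OF s f0W F]] by auto
  moreover have "(t0, f0) \<in> V"
    using \<delta>(1) \<gamma> f0 center_in_sigma_ball[OF s f0W F(2) e] by (simp add: V_def C_def)
  moreover have "pIj \<Theta> q j (\<lambda>s x. shift t f s x - shift t0 f0 s x) < \<epsilon>" if "(t, f) \<in> V" for t f
  proof -
    have t: "\<bar>t - t0\<bar> < \<delta>" "\<bar>t - t0\<bar> < \<gamma>" and f: "f \<in> C" "f \<in> sigma_ball \<Theta> F e f0"
      using that by (auto simp: V_def dist_real_def abs_minus_commute)
    have fW: "f \<in> WTC \<Theta>" using f(1) sigma_top_closure_subset_WTC unfolding C_def by blast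
    have "pIj \<Theta> q j (\<lambda>s x. shift t f0 s x - shift t0 f0 s x) \<le> \<epsilon>/4"
    proof (rule pIj_le[OF s h0W shift_in_WTC[OF s f0W] vq])
      fix x :: "real \<Rightarrow> 'a" assume "x \<in> Kset \<Theta> q j"
      then have "norm (curve_int q (shift (t - t0) (shift t0 f0)) x - curve_int q (shift t0 f0) x) \<le> \<epsilon>/4"
        using \<delta>(2) t(1) by blast
      moreover have "shift (t - t0) (shift t0 f0) = shift t f0" by (simp add: shift_shift)
      ultimately show "norm (curve_int q (shift t f0) x - curve_int q (shift t0 f0) x) \<le> \<epsilon>/4"
        by simp
    qed
    moreover have "pIj \<Theta> q j (\<lambda>s x. shift t f s x - shift t0 f0 s x)
        \<le> pIj \<Theta> q j (\<lambda>s x. shift t f s x - shift t f0 s x) + pIj \<Theta> q j (\<lambda>s x. shift t f0 s x - shift t0 f0 s x)"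
      by (rule pIj_triangle[OF s h0W shift_in_WTC[OF s fW] shift_in_WTC[OF s f0W] vq])
    ultimately show ?thesis using close t(2) f ep by fastforce
  qed
  ultimately show ?thesis unfolding C_def by blast
qed

lemma continuous_map_shift_closure:
  fixes E :: "(real \<Rightarrow> 'a::euclidean_space \<Rightarrow> 'b::euclidean_space) set"
  assumes s: "suitable_moduli \<Theta>" and EW: "E \<subseteq> WTC \<Theta>" and eq: "equicont_mbounds E"
  shows "continuous_map (prod_topology euclideanreal (subtopology (sigma_top \<Theta>) ((sigma_top \<Theta>) closure_of E)))
    (sigma_top \<Theta>) (\<lambda>(t, f). shift t f)"
proof (rule continuous_map_into_sigma_top)
  have "topspace (prod_topology euclideanreal (subtopology (sigma_top \<Theta>) ((sigma_top \<Theta>) closure_of E)))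
      = UNIV \<times> (sigma_top \<Theta>) closure_of E"
    using closure_of_subset_topspace by (fastforce simp: topspace_subtopology)
  note X = this
  show "(\<lambda>(t, f). shift t f) p \<in> WTC \<Theta>" if "p \<in> topspace (prod_topology euclideanreal
      (subtopology (sigma_top \<Theta>) ((sigma_top \<Theta>) closure_of E)))" for p
    using that shift_in_WTC[OF s] sigma_top_closure_subset_WTC unfolding X by fastforce
  show "\<exists>V. openin (prod_topology euclideanreal (subtopology (sigma_top \<Theta>) ((sigma_top \<Theta>) closure_of E))) V \<and>
      p \<in> V \<and> (\<forall>p'\<in>V. pIj \<Theta> q j (\<lambda>s x. (\<lambda>(t, f). shift t f) p' s x - (\<lambda>(t, f). shift t f) p s x) < e)"
    if pX: "p \<in> topspace (prod_topology euclideanreal (subtopology (sigma_top \<Theta>) ((sigma_top \<Theta>) closure_of E)))"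
      and vq: "valid_ivl q" and e: "0 < e" for p q j e
  proof -
    obtain t0 f0 where p: "p = (t0, f0)" and f0: "f0 \<in> (sigma_top \<Theta>) closure_of E"
      using pX unfolding X by blast
    show ?thesis using shift_locally_close[OF s EW eq f0 vq e, of t0 j] unfolding p by auto
  qed
qed

lemma shift_closure_of_invariant:
  assumes cont: "continuous_map (prod_topology euclideanreal (subtopology (sigma_top \<Theta>) ((sigma_top \<Theta>) closure_of E)))
      (sigma_top \<Theta>) (\<lambda>(t, f). shift t f)"
    and EW: "E \<subseteq> WTC \<Theta>" and inv: "\<And>t f. f \<in> E \<Longrightarrow> shift t f \<in> E"
    and g: "g \<in> (sigma_top \<Theta>) closure_of E"
  shows "shift t g \<in> (sigma_top \<Theta>) closure_of E"
proof -
  define H where "H = (sigma_top \<Theta>) closure_of E"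
  have "continuous_map (subtopology (sigma_top \<Theta>) H) (prod_topology euclideanreal (subtopology (sigma_top \<Theta>) H)) (\<lambda>g. (t, g))"
    by (intro continuous_map_pairedI) (auto simp: continuous_map_id[unfolded id_def])
  from continuous_map_compose[OF this cont[folded H_def]]
  have c: "continuous_map (subtopology (sigma_top \<Theta>) H) (sigma_top \<Theta>) (shift t)"
    by (simp add: o_def)
  have "E \<subseteq> H" unfolding H_def by (rule closure_of_subset) (use EW topspace_sigma_top in auto)
  then have "H \<inter> E = E" by blast
  then have "(subtopology (sigma_top \<Theta>) H) closure_of E = H"
    unfolding closure_of_subtopology by (simp add: H_def)
  then have "shift t ` H \<subseteq> (sigma_top \<Theta>) closure_of (shift t ` E)"
    using continuous_map_image_closure_subset[OF c, of E] by simp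
  also have "\<dots> \<subseteq> H" unfolding H_def by (rule closure_of_mono) (use inv in auto)
  finally show ?thesis using g by (auto simp: H_def)
qed

theorem theorem3p1:
  fixes \<Theta> :: modfam
    and E :: "(real \<Rightarrow> 'a::euclidean_space \<Rightarrow> 'b::euclidean_space) set"
  assumes "suitable_moduli \<Theta>"
    and "E \<subseteq> WTC \<Theta>"
    and "equicont_mbounds E"
  shows "(\<forall>t. \<forall>f\<in>(sigma_top \<Theta>) closure_of E. shift t f \<in> WTC \<Theta>) \<and>
         continuous_map (prod_topology euclideanreal (subtopology (sigma_top \<Theta>) ((sigma_top \<Theta>) closure_of E)))
           (sigma_top \<Theta>) (\<lambda>(t, f). shift t f) \<and>
         (\<forall>f::real \<Rightarrow> 'a \<Rightarrow> 'b. f \<in> WTC \<Theta> \<longrightarrow> equicont_mbounds_fun f \<longrightarrow>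
            (\<forall>t. \<forall>g\<in>Hull \<Theta> f. shift t g \<in> Hull \<Theta> f) \<and>
            continuous_map (prod_topology euclideanreal (subtopology (sigma_top \<Theta>) (Hull \<Theta> f)))
              (subtopology (sigma_top \<Theta>) (Hull \<Theta> f)) (\<lambda>(t, g). shift t g) \<and>
            (\<forall>g\<in>Hull \<Theta> f. shift 0 g = g \<and> (\<forall>t s. shift (t + s) g = shift t (shift s g))))"
proof -
  note s = assms(1)
  have hull: "(\<forall>t. \<forall>g\<in>Hull \<Theta> f. shift t g \<in> Hull \<Theta> f) \<and>
      continuous_map (prod_topology euclideanreal (subtopology (sigma_top \<Theta>) (Hull \<Theta> f)))
        (subtopology (sigma_top \<Theta>) (Hull \<Theta> f)) (\<lambda>(t, g). shift t g)"
    if fW: "f \<in> WTC \<Theta>" and em: "equicont_mbounds_fun f" for f :: "real \<Rightarrow> 'a \<Rightarrow> 'b"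
  proof -
    have orbit: "range (\<lambda>t. shift t f) \<subseteq> WTC \<Theta>" using shift_in_WTC[OF s fW] by blast
    have cont: "continuous_map (prod_topology euclideanreal (subtopology (sigma_top \<Theta>) (Hull \<Theta> f)))
        (sigma_top \<Theta>) (\<lambda>(t, g). shift t g)"
      unfolding Hull_def
      by (rule continuous_map_shift_closure[OF s orbit em[unfolded equicont_mbounds_fun_def]])
    have inv: "\<And>t h. h \<in> range (\<lambda>t. shift t f) \<Longrightarrow> shift t h \<in> range (\<lambda>t. shift t f)"
      by (auto simp: shift_shift)
    have "shift t g \<in> Hull \<Theta> f" if "g \<in> Hull \<Theta> f" for t g
      using shift_closure_of_invariant[OF cont[unfolded Hull_def] orbit inv] that unfolding Hull_def by blast
    with cont show ?thesis by (auto simp: continuous_map_in_subtopology)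
  qed
  have "\<forall>t. \<forall>f\<in>(sigma_top \<Theta>) closure_of E. shift t f \<in> WTC \<Theta>"
    using shift_in_WTC[OF s] sigma_top_closure_subset_WTC[of \<Theta> E] by blast
  then show ?thesis
    using continuous_map_shift_closure[OF assms] hull by (auto simp: shift_0 shift_shift add.commute)
qed

end
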